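(* Let $\varepsilon,\delta\ge0$, let $M,N$ be positive integers, and let $\Lambda>0$. Let $P(z)$ be a nonzero polynomial of degree $M$ and $Q(z)$ a monic polynomial of degree $N$ with complex coefficients, and let $S$ be the multiset of the $N$ roots of $Q$. Assume (1) $S\subseteq B_{\Lambda/2}$, and (2) $\nu\varepsilon+2-(N-k)\delta\neq0$ for all integers $0\le k\le N$, $0\le\nu\le M$. For each $\nu\ge0$ define $k_\nu=-1$ if $\nu\varepsilon+2>N\delta$, and otherwise let $k_\nu$ be the integer with $0\le k_\nu\le N-1$ and $(N-k_\nu-1)\delta<\nu\varepsilon+2<(N-k_\nu)\delta$. For a root $\alpha$ of $Q$ define $$\Phi_{\nu,k}(\alpha)=\begin{cases}L_k(\alpha)^{(N-k)\delta-(\nu\varepsilon+2)}\prod_{0\le i<k}L_i(\alpha)^{\delta}, & k\ge0,\\ \Lambda^{N\delta-(\nu\varepsilon+2)}, & k<0.\end{cases}$$ Then $$\int_{B_\Lambda}\frac{|P(z)|^\varepsilon}{|Q(z)|^\delta}\,dV\ \sim\ \sum_{\{\alpha:Q(\alpha)=0\}}\ \sum_{\{\nu:P^{(\nu)}(\alpha)\ne0\}}\frac{|P^{(\nu)}(\alpha)|^\varepsilon}{\Phi_{\nu,k_\nu}(\alpha)},$$ where $\sim$ means each side is bounded by a positive constant multiple of the other (with the convention $1/0=\infty$, so one side is infinite iff the other is), with constants depending only on $\varepsilon,\delta,M,N$ and not on $P,Q,\Lambda$.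
   Context: $dV=dx\,dy$ is Lebesgue measure on $\mathbb{C}$, and $B_r$ is the open disk of radius $r$ centered at $0$. For a set $A\subseteq\mathbb{C}$, $d(A)=\sup_{\alpha,\beta\in A}|\alpha-\beta|$. Local cluster scales: for a root $\alpha\in S$ and $0\le k\le N-1$, $L_k(\alpha)=\inf d(S_{N-k}(\alpha))$, the infimum over all sub-multisets $S_{N-k}(\alpha)\subseteq S$ with $N-k$ elements containing $\alpha$. One has $L_0(\alpha)\ge L_1(\alpha)\ge\dots\ge L_{N-1}(\alpha)=0$. $P^{(\nu)}$ is the $\nu$-th derivative of $P$. *)

theory Defs
  imports "HOL-Analysis.Analysis" "HOL-Computational_Algebra.Polynomial"
begin

definition cluster_scale :: "complex multiset \<Rightarrow> nat \<Rightarrow> complex \<Rightarrow> real" where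
  "cluster_scale S k \<alpha> =
     Inf {diameter (set_mset T) | T. T \<subseteq># S \<and> size T = size S - k \<and> \<alpha> \<in># T}"

definition k_index :: "real \<Rightarrow> real \<Rightarrow> nat \<Rightarrow> nat \<Rightarrow> int" where
  "k_index \<epsilon> \<delta> N \<nu> =
     (if real \<nu> * \<epsilon> + 2 > real N * \<delta> then -1
      else (THE k::int. 0 \<le> k \<and> k \<le> int N - 1 \<and>
              (real_of_int (int N - k - 1)) * \<delta> < real \<nu> * \<epsilon> + 2 \<and>
              real \<nu> * \<epsilon> + 2 < (real_of_int (int N - k)) * \<delta>))"

definition Phi :: "real \<Rightarrow> real \<Rightarrow> real \<Rightarrow> complex multiset \<Rightarrow> nat \<Rightarrow> int \<Rightarrow> complex \<Rightarrow> real" where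
  "Phi \<epsilon> \<delta> \<Lambda> S \<nu> k \<alpha> =
     (if k \<ge> 0 then
        cluster_scale S (nat k) \<alpha> powr
          (real_of_int (int (size S) - k) * \<delta> - (real \<nu> * \<epsilon> + 2))
        * (\<Prod>i<nat k. cluster_scale S i \<alpha> powr \<delta>)
      else \<Lambda> powr (real (size S) * \<delta> - (real \<nu> * \<epsilon> + 2)))"

end

(*
  Fix a root a of Q and a dyadic scale s = 2\<Lambda>/2^j.  Where a is the nearest root and
  |z - a| is about s, |Q z| is comparable to \<Prod>_b max(s, |a - b|), and by Taylor's formula
  |P z| is at most \<Sum>_\<nu> |P^(\<nu>)(a)| s^\<nu>/\<nu>!.  Conversely, on the part of the disc of radius s
  about a that keeps a fixed fraction of s away from all zeros of P and Q (still half the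
  area of the disc), the Cauchy estimates make every single Taylor term a lower bound for |P z|.
  Hence the integral is comparable to the sum over a, \<nu> and j of |P^(\<nu>)(a)|^\<epsilon> exp F(s_j),
  where F(s) = (\<nu>\<epsilon> + 2) ln s - \<delta> \<Sum>_i ln max(s, t_i) and t_0 \<ge> t_1 \<ge> ... are the
  distances from a to the roots.

  As a function of ln s, F is piecewise linear with slopes \<nu>\<epsilon> + 2 - j\<delta>, which the
  non-resonance hypothesis keeps at distance \<ge> \<eta> > 0 from zero.  So the dyadic sum is a
  two-sided geometric series, comparable to the value of exp F at its peak, s = t_k for
  k = k_\<nu> (or s = \<Lambda> when k_\<nu> = -1).  Since t_i \<le> L_i(a) \<le> 2 t_i, this peak value is
  1/\<Phi>_{\<nu>,k_\<nu>}(a) up to constants; if L_k(a) = 0, F is unbounded near s = 0 and both sides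
  are infinite.
*)

theory Submission
  imports Defs "HOL-Complex_Analysis.Complex_Analysis"
    "HOL-Computational_Algebra.Fundamental_Theorem_Algebra"
begin

lemma prod_mset_nonneg:
  fixes f :: "'a \<Rightarrow> 'b::linordered_semidom"
  assumes "\<And>x. x \<in># A \<Longrightarrow> 0 \<le> f x"
  shows "0 \<le> (\<Prod>x\<in>#A. f x)"
  using assms by (induction A) auto

lemma prod_mset_mono:
  fixes f g :: "'a \<Rightarrow> 'b::linordered_semidom"
  assumes "\<And>x. x \<in># A \<Longrightarrow> 0 \<le> f x" and "\<And>x. x \<in># A \<Longrightarrow> f x \<le> g x"
  shows "(\<Prod>x\<in>#A. f x) \<le> (\<Prod>x\<in>#A. g x)"
  using assms
proof (induction A)
  case (add x A)
  have "f x * (\<Prod>x\<in>#A. f x) \<le> g x * (\<Prod>x\<in>#A. g x)"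
    by (rule mult_mono) (use add prod_mset_nonneg[of A f] in \<open>auto intro: order_trans\<close>)
  then show ?case by simp
qed simp

lemma norm_prod_mset:
  fixes f :: "'a \<Rightarrow> 'b::real_normed_field"
  shows "norm (\<Prod>x\<in>#A. f x) = (\<Prod>x\<in>#A. norm (f x))"
  by (induction A) (auto simp: norm_mult)

lemma prod_mset_const_times:
  fixes f :: "'a \<Rightarrow> 'b::comm_monoid_mult"
  shows "(\<Prod>x\<in>#A. c * f x) = c ^ size A * (\<Prod>x\<in>#A. f x)"
  by (induction A) (auto simp: ac_simps)

lemma norm_poly_eq_prod_proots:
  fixes p :: "complex poly"
  shows "cmod (poly p z) = cmod (lead_coeff p) * (\<Prod>w\<in>#proots p. cmod (z - w))"
proof -
  have "poly p z = poly (smult (lead_coeff p) (\<Prod>x\<in>#proots p. [:-x, 1:])) z"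
    by (simp add: complex_poly_decompose_multiset)
  also have "\<dots> = lead_coeff p * (\<Prod>w\<in>#proots p. (z - w))"
    by (simp add: poly_prod_mset image_mset.compositionality o_def)
  finally show ?thesis
    by (simp add: norm_mult norm_prod_mset image_mset.compositionality o_def)
qed

lemma higher_pderiv_eq_0:
  fixes p :: "'a::{idom,semiring_char_0} poly"
  assumes "degree p < n"
  shows "(pderiv ^^ n) p = 0"
  by (rule poly_eqI) (use assms in \<open>simp add: coeff_higher_pderiv coeff_eq_0\<close>)

lemma higher_deriv_poly: "(deriv ^^ n) (poly p) = poly ((pderiv ^^ n) p)"
proof (induction n)
  case (Suc n)
  show ?case by (simp add: Suc fun_eq_iff DERIV_imp_deriv poly_DERIV)
qed simp

lemma higher_pderiv_pcompose_shift:
  "(pderiv ^^ n) (pcompose p [:a, 1:]) = pcompose ((pderiv ^^ n) p) [:a, 1:]"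
  by (induction n) (simp_all add: pderiv_pcompose pderiv_pCons)

lemma coeff_pcompose_shift:
  fixes p :: "'a::field_char_0 poly"
  shows "coeff (pcompose p [:a, 1:]) i = poly ((pderiv ^^ i) p) a / fact i"
proof -
  have "coeff ((pderiv ^^ i) (pcompose p [:a, 1:])) 0 = pochhammer 1 i * coeff (pcompose p [:a, 1:]) i"
    using coeff_higher_pderiv[of i "pcompose p [:a, 1:]" 0] by simp
  moreover have "coeff ((pderiv ^^ i) (pcompose p [:a, 1:])) 0 = poly ((pderiv ^^ i) p) a"
    by (simp add: higher_pderiv_pcompose_shift poly_0_coeff_0[symmetric] poly_pcompose)
  ultimately show ?thesis by (simp add: pochhammer_fact[symmetric])
qed

lemma norm_poly_le_Taylor_sum:
  fixes p :: "complex poly"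
  shows "cmod (poly p z) \<le> (\<Sum>i\<le>degree p. cmod (poly ((pderiv ^^ i) p) a) / fact i * cmod (z - a) ^ i)"
proof -
  have "poly p z = poly (pcompose p [:a, 1:]) (z - a)"
    by (simp add: poly_pcompose)
  also have "\<dots> = (\<Sum>i\<le>degree p. coeff (pcompose p [:a, 1:]) i * (z - a) ^ i)"
    by (simp add: poly_altdef degree_pcompose)
  finally have "cmod (poly p z) \<le> (\<Sum>i\<le>degree p. cmod (coeff (pcompose p [:a, 1:]) i * (z - a) ^ i))"
    by (metis norm_sum)
  also have "\<dots> = (\<Sum>i\<le>degree p. cmod (poly ((pderiv ^^ i) p) a) / fact i * cmod (z - a) ^ i)"
    by (simp add: coeff_pcompose_shift norm_mult norm_divide norm_power)
  finally show ?thesis .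
qed

lemma norm_higher_pderiv_le_prod_proots:
  fixes p :: "complex poly"
  assumes "0 < s" "p \<noteq> 0"
  shows "cmod (poly ((pderiv ^^ n) p) a) / fact n * s ^ n
          \<le> cmod (lead_coeff p) * (\<Prod>w\<in>#proots p. s + cmod (a - w))"
proof -
  have "cmod ((deriv ^^ n) (poly p) a)
          \<le> fact n * (cmod (lead_coeff p) * (\<Prod>w\<in>#proots p. s + cmod (a - w))) / s ^ n"
  proof (rule Cauchy_inequality)
    fix x assume x: "cmod (a - x) = s"
    have "(\<Prod>w\<in>#proots p. cmod (x - w)) \<le> (\<Prod>w\<in>#proots p. s + cmod (a - w))"
    proof (rule prod_mset_mono)
      fix w
      have "cmod (x - w) \<le> cmod (x - a) + cmod (a - w)"
        using norm_triangle_ineq[of "x - a" "a - w"] by simp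
      then show "cmod (x - w) \<le> s + cmod (a - w)"
        using x by (simp add: norm_minus_commute)
    qed simp
    then show "cmod (poly p x) \<le> cmod (lead_coeff p) * (\<Prod>w\<in>#proots p. s + cmod (a - w))"
      by (simp add: norm_poly_eq_prod_proots mult_left_mono)
  qed (use assms in \<open>auto intro: holomorphic_intros continuous_intros\<close>)
  then show ?thesis using assms by (simp add: higher_deriv_poly field_simps)
qed

text \<open>At distance at least \<open>\<eta> s\<close> from all zeros of \<open>p\<close>, every zero \<open>w\<close> satisfies
  \<open>|z - w| \<ge> (\<eta>/3)(s + |a - w|)\<close>: if \<open>|a - w| \<le> 2s\<close> by the distance assumption,
  otherwise by the triangle inequality.\<close>
lemma norm_poly_ge_away_from_roots:
  fixes p :: "complex poly" and \<eta> s :: real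
  assumes "0 < \<eta>" "\<eta> \<le> 1" "0 < s" "cmod (z - a) \<le> s" "p \<noteq> 0"
    and far: "\<And>w. poly p w = 0 \<Longrightarrow> \<eta> * s \<le> cmod (z - w)"
  shows "(\<eta> / 3) ^ degree p * (cmod (lead_coeff p) * (\<Prod>w\<in>#proots p. s + cmod (a - w)))
           \<le> cmod (poly p z)"
proof -
  have "(\<Prod>w\<in>#proots p. (\<eta> / 3) * (s + cmod (a - w))) \<le> (\<Prod>w\<in>#proots p. cmod (z - w))"
  proof (rule prod_mset_mono)
    fix w assume "w \<in># proots p"
    then have "\<eta> * s \<le> cmod (z - w)" using far assms(5) by simp
    moreover have "cmod (a - w) \<le> cmod (z - a) + cmod (z - w)"
      using norm_triangle_ineq[of "a - z" "z - w"] norm_minus_commute[of a z] by simp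
    moreover have "(\<eta> / 3) * (s + cmod (a - w)) \<le> (1 / 3) * (s + cmod (a - w))"
      using assms by (intro mult_right_mono) auto
    moreover have "(\<eta> / 3) * (s + cmod (a - w)) \<le> \<eta> * s" if "cmod (a - w) \<le> 2 * s"
      using mult_left_mono[OF that, of "\<eta> / 3"] assms(1) by (simp add: field_simps)
    ultimately show "(\<eta> / 3) * (s + cmod (a - w)) \<le> cmod (z - w)"
      using assms(4) by (cases "cmod (a - w) \<le> 2 * s") auto
  qed (use assms in auto)
  then have "(\<eta> / 3) ^ degree p * (\<Prod>w\<in>#proots p. s + cmod (a - w)) \<le> (\<Prod>w\<in>#proots p. cmod (z - w))"
    by (simp only: prod_mset_const_times size_proots_complex)
  then show ?thesis
    by (simp add: norm_poly_eq_prod_proots[of p z] mult.left_commute mult_left_mono)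
qed

definition root_dist_prod :: "complex multiset \<Rightarrow> complex \<Rightarrow> real \<Rightarrow> real" where
  "root_dist_prod S a s = (\<Prod>b\<in>#S. max s (cmod (a - b)))"

lemma root_dist_prod_pos: "0 < s \<Longrightarrow> 0 < root_dist_prod S a s"
  unfolding root_dist_prod_def by (induction S) (auto simp: less_max_iff_disj)

lemma root_dist_prod_mono: "0 \<le> s \<Longrightarrow> s \<le> s' \<Longrightarrow> root_dist_prod S a s \<le> root_dist_prod S a s'"
  unfolding root_dist_prod_def by (rule prod_mset_mono) auto

lemma root_dist_prod_double: "0 \<le> s \<Longrightarrow> root_dist_prod S a (2 * s) \<le> 2 ^ size S * root_dist_prod S a s"
  unfolding root_dist_prod_def prod_mset_const_times[symmetric] by (rule prod_mset_mono) auto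

lemma prod_dist_le_root_dist_prod:
  "(\<Prod>b\<in>#S. cmod (z - b)) \<le> 2 ^ size S * root_dist_prod S a (cmod (z - a))"
  unfolding root_dist_prod_def prod_mset_const_times[symmetric]
proof (rule prod_mset_mono)
  fix b
  have "cmod (z - b) \<le> cmod (z - a) + cmod (a - b)"
    using norm_triangle_ineq[of "z - a" "a - b"] by simp
  then show "cmod (z - b) \<le> 2 * max (cmod (z - a)) (cmod (a - b))"
    by linarith
qed simp

lemma root_dist_prod_le_prod_dist:
  assumes nearest: "\<And>b. b \<in># S \<Longrightarrow> cmod (z - a) \<le> cmod (z - b)"
  shows "root_dist_prod S a (cmod (z - a)) \<le> 2 ^ size S * (\<Prod>b\<in>#S. cmod (z - b))"
  unfolding root_dist_prod_def prod_mset_const_times[symmetric]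
proof (rule prod_mset_mono)
  fix b assume "b \<in># S"
  moreover have "cmod (a - b) \<le> cmod (z - a) + cmod (z - b)"
    using norm_triangle_ineq[of "a - z" "z - b"] norm_minus_commute[of a z] by simp
  ultimately show "max (cmod (z - a)) (cmod (a - b)) \<le> 2 * cmod (z - b)"
    using nearest[of b] norm_ge_zero[of "z - b"] by linarith
qed (simp add: le_max_iff_disj)

definition sorted_dists :: "complex multiset \<Rightarrow> complex \<Rightarrow> real list" where
  "sorted_dists S a = sorted_list_of_multiset (image_mset (\<lambda>b. cmod (a - b)) S)"

definition nth_largest_dist :: "complex multiset \<Rightarrow> complex \<Rightarrow> nat \<Rightarrow> real" where
  "nth_largest_dist S a i = sorted_dists S a ! (size S - 1 - i)"

lemma sorted_dists:
  "sorted (sorted_dists S a)" "length (sorted_dists S a) = size S"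
  "mset (sorted_dists S a) = image_mset (\<lambda>b. cmod (a - b)) S"
  unfolding sorted_dists_def
  by (simp, metis mset_sorted_list_of_multiset size_mset size_image_mset, simp)

lemma length_filter_take_drop:
  "length (filter P xs) = length (filter P (take j xs)) + length (filter P (drop j xs))"
  by (metis append_take_drop_id filter_append length_append)

lemma length_filter_less_nth_sorted:
  fixes xs :: "'a::linorder list"
  assumes "sorted xs" "j < length xs"
  shows "length (filter (\<lambda>d. d < xs ! j) xs) \<le> j"
proof -
  have "xs ! j \<le> d" if d: "d \<in> set (drop j xs)" for d
  proof -
    obtain k where "k < length (drop j xs)" "d = drop j xs ! k"
      using d unfolding in_set_conv_nth by blast
    then have "d = xs ! (j + k)" "j + k < length xs" using assms by simp_all
    then show ?thesis using assms(1) by (simp add: sorted_nth_mono)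
  qed
  then have "filter (\<lambda>d. d < xs ! j) (drop j xs) = []"
    by (auto simp: filter_empty_conv dest: leD)
  then have "length (filter (\<lambda>d. d < xs ! j) xs) = length (filter (\<lambda>d. d < xs ! j) (take j xs))"
    using length_filter_take_drop[of _ xs j] by simp
  also have "\<dots> \<le> j"
    using length_filter_le[of _ "take j xs"] by simp
  finally show ?thesis .
qed

lemma length_filter_le_nth_sorted:
  fixes xs :: "'a::linorder list"
  assumes "sorted xs" "j < length xs"
  shows "j + 1 \<le> length (filter (\<lambda>d. d \<le> xs ! j) xs)"
proof -
  have "d \<le> xs ! j" if d: "d \<in> set (take (j + 1) xs)" for d
  proof -
    obtain k where "k < length (take (j + 1) xs)" "d = take (j + 1) xs ! k"
      using d unfolding in_set_conv_nth by blast
    then have "d = xs ! k" "k \<le> j" by auto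
    then show ?thesis using assms by (simp add: sorted_nth_mono)
  qed
  then have "filter (\<lambda>d. d \<le> xs ! j) (take (j + 1) xs) = take (j + 1) xs"
    by simp
  then show ?thesis
    using length_filter_take_drop[of _ xs "j + 1"] assms by simp
qed

lemma root_dist_prod_eq_prod_nth_largest_dist:
  "root_dist_prod S a s = (\<Prod>i<size S. max s (nth_largest_dist S a i))"
proof -
  have "root_dist_prod S a s = prod_mset (image_mset (max s) (image_mset (\<lambda>b. cmod (a - b)) S))"
    by (simp add: root_dist_prod_def image_mset.compositionality o_def)
  also have "\<dots> = prod_list (map (max s) (sorted_dists S a))"
    by (metis sorted_dists(3) mset_map prod_mset_prod_list)
  also have "\<dots> = (\<Prod>j<size S. max s (sorted_dists S a ! j))"
    by (simp add: prod.list_conv_set_nth sorted_dists atLeast0LessThan)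
  also have "\<dots> = (\<Prod>i<size S. max s (sorted_dists S a ! (size S - Suc i)))"
    by (rule prod.nat_diff_reindex[symmetric])
  finally show ?thesis by (simp add: nth_largest_dist_def)
qed

lemma nth_largest_dist_antimono: "i \<le> j \<Longrightarrow> j < size S \<Longrightarrow> nth_largest_dist S a j \<le> nth_largest_dist S a i"
  unfolding nth_largest_dist_def by (rule sorted_nth_mono) (auto simp: sorted_dists)

lemma nth_largest_dist_in: "i < size S \<Longrightarrow> \<exists>b\<in>#S. nth_largest_dist S a i = cmod (a - b)"
proof -
  assume "i < size S"
  then have "nth_largest_dist S a i \<in> set (sorted_dists S a)"
    unfolding nth_largest_dist_def by (simp add: sorted_dists)
  then have "nth_largest_dist S a i \<in># mset (sorted_dists S a)" by simp
  then show ?thesis by (auto simp: sorted_dists)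
qed

lemma nth_largest_dist_nonneg: "i < size S \<Longrightarrow> 0 \<le> nth_largest_dist S a i"
  using nth_largest_dist_in[of i S a] by auto

lemma nth_largest_dist_less:
  assumes "set_mset S \<subseteq> ball 0 (r / 2)" "a \<in># S" "i < size S"
  shows "nth_largest_dist S a i < r"
proof -
  obtain b where b: "b \<in># S" "nth_largest_dist S a i = cmod (a - b)"
    using nth_largest_dist_in[OF assms(3)] by blast
  have "cmod a < r / 2" "cmod b < r / 2" using assms(1,2) b(1) by auto
  moreover have "cmod (a - b) \<le> cmod a + cmod b" by (rule norm_triangle_ineq4)
  ultimately show ?thesis using b by simp
qed

lemma exists_submset_size:
  assumes "a \<in># F" "1 \<le> m" "m \<le> size F"
  obtains T where "T \<subseteq># F" "a \<in># T" "size T = m"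
proof -
  define F' where "F' = F - {#a#}"
  have F: "F = add_mset a F'" using assms(1) by (simp add: F'_def)
  obtain xs where xs: "mset xs = F'" using ex_mset by blast
  define T where "T = add_mset a (mset (take (m - 1) xs))"
  have "mset (take (m - 1) xs) \<subseteq># F'"
    by (metis xs append_take_drop_id mset_append mset_subset_eq_add_left)
  then have "T \<subseteq># F" unfolding T_def F by simp
  moreover have "size T = m"
    using assms(2,3) xs F by (auto simp: T_def min_def)
  ultimately show ?thesis using that by (simp add: T_def)
qed

lemma cluster_scale_eq_Inf:
  assumes "a \<in># S" "i < size S"
  defines "X \<equiv> {diameter (set_mset T) | T. T \<subseteq># S \<and> size T = size S - i \<and> a \<in># T}"
  shows "cluster_scale S i a = Inf X" "X \<noteq> {}" "bdd_below X"
proof -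
  show "cluster_scale S i a = Inf X" by (simp add: cluster_scale_def X_def)
  have "1 \<le> size S - i" "size S - i \<le> size S" using assms by auto
  then obtain T where "T \<subseteq># S" "a \<in># T" "size T = size S - i"
    using exists_submset_size[OF assms(1)] by blast
  then show "X \<noteq> {}" unfolding X_def by blast
  have "\<forall>x\<in>X. 0 \<le> x" unfolding X_def by (auto intro!: diameter_ge_0)
  then show "bdd_below X" by (meson bdd_below_def)
qed

text \<open>Fewer than \<open>N - i\<close> roots lie strictly closer to \<open>a\<close> than the \<open>i\<close>-th largest distance
  \<open>t\<^sub>i\<close>, so every sub-multiset admissible for \<open>L\<^sub>i\<close> reaches distance \<open>t\<^sub>i\<close> from \<open>a\<close>; and the
  roots in the closed disc of radius \<open>t\<^sub>i\<close> about \<open>a\<close> contain an admissible sub-multiset of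
  diameter at most \<open>2 t\<^sub>i\<close>.\<close>

lemma nth_largest_dist_le_cluster_scale:
  assumes a: "a \<in># S" and i: "i < size S"
  shows "nth_largest_dist S a i \<le> cluster_scale S i a"
proof -
  define t where "t = nth_largest_dist S a i"
  define d where "d = (\<lambda>b. cmod (a - b))"
  have few_closer: "size (filter_mset (\<lambda>x. x < t) (image_mset d S)) \<le> size S - 1 - i"
  proof -
    have "image_mset d S = mset (sorted_dists S a)" by (simp add: sorted_dists d_def)
    then have "size (filter_mset (\<lambda>x. x < t) (image_mset d S)) = length (filter (\<lambda>x. x < t) (sorted_dists S a))"
      by (metis mset_filter size_mset)
    also have "\<dots> \<le> size S - 1 - i"
      unfolding t_def nth_largest_dist_def
      by (rule length_filter_less_nth_sorted) (use i in \<open>auto simp: sorted_dists\<close>)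
    finally show ?thesis .
  qed
  show ?thesis unfolding cluster_scale_eq_Inf[OF assms] t_def[symmetric]
  proof (rule cInf_greatest[OF cluster_scale_eq_Inf(2)[OF assms]])
    fix x assume "x \<in> {diameter (set_mset T) | T. T \<subseteq># S \<and> size T = size S - i \<and> a \<in># T}"
    then obtain T where T: "x = diameter (set_mset T)" "T \<subseteq># S" "size T = size S - i" "a \<in># T"
      by blast
    have "\<exists>b\<in>#T. t \<le> d b"
    proof (rule ccontr)
      assume "\<not> ?thesis"
      then have "filter_mset (\<lambda>x. x < t) (image_mset d T) = filter_mset (\<lambda>_. True) (image_mset d T)"
        by (intro filter_mset_cong0) auto
      then have "image_mset d T = filter_mset (\<lambda>x. x < t) (image_mset d T)" by simp
      also have "\<dots> \<subseteq># filter_mset (\<lambda>x. x < t) (image_mset d S)"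
        by (intro multiset_filter_mono image_mset_subseteq_mono T(2))
      finally have "size T \<le> size S - 1 - i"
        using size_mset_mono few_closer by (metis le_trans size_image_mset)
      then show False using T(3) i by simp
    qed
    then obtain b where b: "b \<in># T" "t \<le> dist a b" by (auto simp: d_def dist_norm)
    note b(2)
    also have "dist a b \<le> diameter (set_mset T)"
      by (rule diameter_bounded_bound) (use T b in auto)
    finally show "t \<le> x" using T by simp
  qed
qed

lemma cluster_scale_le_nth_largest_dist:
  assumes a: "a \<in># S" and i: "i < size S"
  shows "cluster_scale S i a \<le> 2 * nth_largest_dist S a i"
proof -
  define t where "t = nth_largest_dist S a i"
  define j where "j = size S - 1 - i"
  have t0: "0 \<le> t" using nth_largest_dist_nonneg[OF i] by (simp add: t_def)
  define d where "d = (\<lambda>b. cmod (a - b))"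
  define F where "F = filter_mset (\<lambda>b. d b \<le> t) S"
  have "size F = size (image_mset d F)" by simp
  also have "image_mset d F = filter_mset (\<lambda>x. x \<le> t) (image_mset d S)"
    unfolding F_def by (rule image_mset_filter_mset_swap)
  also have "image_mset d S = mset (sorted_dists S a)" by (simp add: sorted_dists d_def)
  also have "size (filter_mset (\<lambda>x. x \<le> t) (mset (sorted_dists S a)))
      = length (filter (\<lambda>x. x \<le> t) (sorted_dists S a))"
    by (metis mset_filter size_mset)
  finally have "j + 1 \<le> size F"
    using length_filter_le_nth_sorted[OF sorted_dists(1), of j S a] i
    by (simp add: t_def nth_largest_dist_def sorted_dists j_def)
  then have "1 \<le> size S - i" "size S - i \<le> size F" using i by (simp_all add: j_def)
  moreover have "a \<in># F" using a t0 by (simp add: F_def d_def)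
  ultimately obtain T where T: "T \<subseteq># F" "a \<in># T" "size T = size S - i"
    using exists_submset_size[of a F "size S - i"] by blast
  have TS: "T \<subseteq># S"
    using T(1) unfolding F_def by (meson multiset_filter_subset subset_mset.order_trans)
  have near: "cmod (a - b) \<le> t" if "b \<in># T" for b
    using T(1) that by (auto simp: F_def d_def dest!: mset_subset_eqD)
  have "diameter (set_mset T) \<le> 2 * t"
  proof (rule diameter_le)
    fix x y assume "x \<in> set_mset T" "y \<in> set_mset T"
    then have "cmod (a - x) \<le> t" "cmod (a - y) \<le> t" using near by auto
    moreover have "cmod (x - y) \<le> cmod (a - x) + cmod (a - y)"
      using norm_triangle_ineq[of "x - a" "a - y"] norm_minus_commute[of x a] by simp
    ultimately show "norm (x - y) \<le> 2 * t" by simp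
  qed (use t0 in simp)
  moreover have "cluster_scale S i a \<le> diameter (set_mset T)"
    unfolding cluster_scale_eq_Inf[OF assms]
    by (rule cInf_lower) (use T TS cluster_scale_eq_Inf(3)[OF assms] in auto)
  ultimately show ?thesis unfolding t_def by simp
qed

section \<open>The logarithmic profile of a scale\<close>

definition log_profile :: "real \<Rightarrow> real \<Rightarrow> nat \<Rightarrow> (nat \<Rightarrow> real) \<Rightarrow> real \<Rightarrow> real" where
  "log_profile x \<delta> N t s = x * ln s - \<delta> * (\<Sum>i<N. ln (max s (t i)))"

lemma exp_log_profile:
  assumes "0 < s"
  shows "exp (log_profile (a + 2) \<delta> (size S) (nth_largest_dist S b) s)
           = s powr a * s ^ 2 / root_dist_prod S b s powr \<delta>"
proof -
  have "ln (root_dist_prod S b s) = (\<Sum>i<size S. ln (max s (nth_largest_dist S b i)))"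
    unfolding root_dist_prod_eq_prod_nth_largest_dist
    by (rule ln_prod) (use assms in \<open>auto simp: less_max_iff_disj\<close>)
  moreover have "s powr a * s ^ 2 = exp ((a + 2) * ln s)"
    using assms by (simp add: powr_def exp_add[symmetric] algebra_simps
        flip: powr_realpow exp_of_nat_mult)
  moreover have "root_dist_prod S b s powr \<delta> = exp (\<delta> * ln (root_dist_prod S b s))"
    using root_dist_prod_pos[OF assms, of S b] by (simp add: powr_def mult.commute)
  ultimately show ?thesis by (simp add: log_profile_def exp_diff)
qed

lemma log_profile_le_top:
  assumes "0 < s" "s \<le> 2 * r" "0 \<le> \<delta>" "\<eta> \<le> x - N * \<delta>"
  shows "log_profile x \<delta> N t s + (N * \<delta> - x) * ln r \<le> x * ln 2 - \<eta> * \<bar>ln s - ln (2 * r)\<bar>"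
proof -
  have "N * ln s \<le> (\<Sum>i<N. ln (max s (t i)))"
    using sum_mono[of "{..<N}" "\<lambda>_. ln s" "\<lambda>i. ln (max s (t i))"] assms(1) by simp
  then have "\<delta> * (N * ln s) \<le> \<delta> * (\<Sum>i<N. ln (max s (t i)))"
    using assms(3) by (rule mult_left_mono)
  then have "log_profile x \<delta> N t s + (N * \<delta> - x) * ln r \<le> (x - N * \<delta>) * (ln s - ln r)"
    by (simp add: log_profile_def algebra_simps)
  moreover have "0 < r" using assms(1,2) by linarith
  then have "ln s - ln r = (ln s - ln (2 * r)) + ln 2" "ln s \<le> ln (2 * r)"
    using assms(1,2) by (simp add: ln_mult, subst ln_le_cancel_iff) auto
  moreover have "(x - N * \<delta>) * (ln s - ln (2 * r)) \<le> \<eta> * (ln s - ln (2 * r))"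
    using assms(4) \<open>ln s \<le> ln (2 * r)\<close> by (intro mult_right_mono_neg) auto
  moreover have "(x - N * \<delta>) * ln 2 \<le> x * ln 2"
    using assms by (intro mult_right_mono) auto
  moreover have "\<eta> * \<bar>ln s - ln (2 * r)\<bar> = - (\<eta> * (ln s - ln (2 * r)))"
    using \<open>ln s \<le> ln (2 * r)\<close> by (simp add: algebra_simps)
  ultimately show ?thesis
    by (simp only: distrib_left)
qed

lemma sum_lessThan_split:
  fixes k N :: nat
  assumes "k \<le> N"
  shows "(\<Sum>i<N. f i) = (\<Sum>i<k. f i) + (\<Sum>i\<in>{k..<N}. f i)"
  using sum.atLeastLessThan_concat[of 0 k N f] assms by (simp add: atLeast0LessThan)

lemma sum_ln_max_ge_peak:
  fixes t :: "nat \<Rightarrow> real"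
  assumes "k < N" "0 < s" "0 < t k" and anti: "\<And>i j. i \<le> j \<Longrightarrow> j < N \<Longrightarrow> t j \<le> t i"
  shows "(\<Sum>i<k. ln (t i)) + ln (max s (t k)) + (real N - real k - 1) * ln s
           \<le> (\<Sum>i<N. ln (max s (t i)))"
proof -
  have "(\<Sum>i<k. ln (t i)) \<le> (\<Sum>i<k. ln (max s (t i)))"
  proof (rule sum_mono)
    fix i assume "i \<in> {..<k}"
    then have "0 < t i" using anti[of i k] assms(1,3) by auto
    then show "ln (t i) \<le> ln (max s (t i))" by simp
  qed
  moreover have "(\<Sum>i\<in>{Suc k..<N}. ln s) \<le> (\<Sum>i\<in>{Suc k..<N}. ln (max s (t i)))"
    by (rule sum_mono) (use assms(2) in auto)
  moreover have "(\<Sum>i\<in>{Suc k..<N}. ln s) = (real N - real k - 1) * ln s"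
    using assms(1) by (simp add: of_nat_diff)
  moreover have "(\<Sum>i<N. ln (max s (t i)))
      = (\<Sum>i<k. ln (max s (t i))) + ln (max s (t k)) + (\<Sum>i\<in>{Suc k..<N}. ln (max s (t i)))"
    using sum_lessThan_split[of "Suc k" N] assms(1) by simp
  ultimately show ?thesis by linarith
qed

text \<open>As a function of \<open>ln s\<close> the profile is piecewise linear with slope \<open>x - j \<delta>\<close> where
  \<open>j\<close> counts the \<open>t i \<le> s\<close>; the slope changes sign at \<open>s = t k\<close>.\<close>
lemma log_profile_le_peak:
  fixes t :: "nat \<Rightarrow> real"
  assumes "k < N" "0 < s" "0 < t k" "0 \<le> \<delta>"
    and anti: "\<And>i j. i \<le> j \<Longrightarrow> j < N \<Longrightarrow> t j \<le> t i"
    and below: "\<eta> \<le> x - (real N - real k - 1) * \<delta>"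
    and above: "\<eta> \<le> (real N - real k) * \<delta> - x"
  shows "log_profile x \<delta> N t s
           \<le> (x - (real N - real k) * \<delta>) * ln (t k) - \<delta> * (\<Sum>i<k. ln (t i)) - \<eta> * \<bar>ln s - ln (t k)\<bar>"
proof -
  define X where "X = (\<Sum>i<k. ln (t i))"
  have "\<delta> * (X + ln (max s (t k)) + (real N - real k - 1) * ln s) \<le> \<delta> * (\<Sum>i<N. ln (max s (t i)))"
    unfolding X_def using sum_ln_max_ge_peak[of k N s t, OF assms(1-3) anti] assms(4)
    by (rule mult_left_mono)
  then have le: "log_profile x \<delta> N t s
                   \<le> x * ln s - \<delta> * (X + ln (max s (t k)) + (real N - real k - 1) * ln s)"
    by (simp add: log_profile_def)
  show ?thesis
  proof (cases "s \<le> t k")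
    case True
    then have "0 \<le> (x - (real N - real k - 1) * \<delta> - \<eta>) * (ln (t k) - ln s)"
      using below assms(2) by (intro mult_nonneg_nonneg) auto
    moreover have "\<eta> * \<bar>ln s - ln (t k)\<bar> = \<eta> * (ln (t k) - ln s)"
      using True assms(2) by auto
    moreover have "(x - (real N - real k) * \<delta>) * ln (t k) - \<delta> * X - \<eta> * (ln (t k) - ln s)
        - (x * ln s - \<delta> * (X + ln (t k) + (real N - real k - 1) * ln s))
        = (x - (real N - real k - 1) * \<delta> - \<eta>) * (ln (t k) - ln s)"
      by (simp add: algebra_simps)
    ultimately show ?thesis
      using le[unfolded max_absorb2[OF True]] unfolding X_def[symmetric] by linarith
  next
    case False
    then have "t k \<le> s" by simp
    have "0 \<le> ((real N - real k) * \<delta> - x - \<eta>) * (ln s - ln (t k))"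
      using above assms(3) \<open>t k \<le> s\<close> by (intro mult_nonneg_nonneg) auto
    moreover have "\<eta> * \<bar>ln s - ln (t k)\<bar> = \<eta> * (ln s - ln (t k))"
      using \<open>t k \<le> s\<close> assms(3) by auto
    moreover have "(x - (real N - real k) * \<delta>) * ln (t k) - \<delta> * X - \<eta> * (ln s - ln (t k))
        - (x * ln s - \<delta> * (X + ln s + (real N - real k - 1) * ln s))
        = ((real N - real k) * \<delta> - x - \<eta>) * (ln s - ln (t k))"
      by (simp add: algebra_simps)
    ultimately show ?thesis
      using le[unfolded max_absorb1[OF \<open>t k \<le> s\<close>]] unfolding X_def[symmetric] by linarith
  qed
qed

lemma log_profile_ge:
  fixes t :: "nat \<Rightarrow> real"
  assumes "k \<le> N" "0 < s" "s \<le> r" "0 \<le> \<delta>"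
    and large: "\<And>i. i < k \<Longrightarrow> s \<le> t i" and small: "\<And>i. k \<le> i \<Longrightarrow> i < N \<Longrightarrow> t i \<le> r"
  shows "x * ln s - \<delta> * ((\<Sum>i<k. ln (t i)) + (real N - real k) * ln r) \<le> log_profile x \<delta> N t s"
proof -
  have "(\<Sum>i<k. ln (max s (t i))) = (\<Sum>i<k. ln (t i))"
    using large by (intro sum.cong) (auto simp: max_def)
  moreover have "(\<Sum>i\<in>{k..<N}. ln (max s (t i))) \<le> (\<Sum>i\<in>{k..<N}. ln r)"
    using small assms(2,3) by (intro sum_mono) auto
  ultimately have "(\<Sum>i<N. ln (max s (t i))) \<le> (\<Sum>i<k. ln (t i)) + (real N - real k) * ln r"
    using sum_lessThan_split[OF assms(1), of "\<lambda>i. ln (max s (t i))"] assms(1)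
    by (simp add: of_nat_diff)
  then show ?thesis
    unfolding log_profile_def using assms(4) by (simp add: mult_left_mono)
qed

lemma log_profile_unbounded:
  fixes t :: "nat \<Rightarrow> real"
  assumes "k < N" "x < (real N - real k) * \<delta>" "0 \<le> \<delta>" "0 < \<rho>" "\<rho> \<le> r"
    and anti: "\<And>i j. i \<le> j \<Longrightarrow> j < N \<Longrightarrow> t j \<le> t i"
    and "t k = 0" "\<And>i. i < N \<Longrightarrow> t i \<le> r"
  obtains s where "0 < s" "s \<le> \<rho>" "B \<le> log_profile x \<delta> N t s"
proof -
  define E where "E = (real N - real k) * \<delta> - x"
  have E: "0 < E" using assms(2) by (simp add: E_def)
  define s where "s = min \<rho> (exp (- (\<bar>B\<bar> + \<delta> * k * \<bar>ln r\<bar>) / E))"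
  have s: "0 < s" "s \<le> \<rho>" using assms(4) by (auto simp: s_def)
  have "ln s \<le> ln (exp (- (\<bar>B\<bar> + \<delta> * k * \<bar>ln r\<bar>) / E))"
    using s by (subst ln_le_cancel_iff) (auto simp: s_def)
  then have "ln s \<le> - (\<bar>B\<bar> + \<delta> * k * \<bar>ln r\<bar>) / E" by simp
  then have lsE: "E * ln s \<le> - (\<bar>B\<bar> + \<delta> * k * \<bar>ln r\<bar>)" using E by (simp add: field_simps)
  have "(\<Sum>i<k. ln (max s (t i))) \<le> (\<Sum>i<k. ln r)"
    using assms(1,5,8) s by (intro sum_mono) auto
  moreover have "ln (max s (t i)) = ln s" if "i \<in> {k..<N}" for i
    using anti[of k i] that assms(7) s(1) by (simp add: max_def)
  then have "(\<Sum>i\<in>{k..<N}. ln (max s (t i))) = (\<Sum>i\<in>{k..<N}. ln s)"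
    by (rule sum.cong[OF refl])
  ultimately have "(\<Sum>i<N. ln (max s (t i))) \<le> k * ln r + (real N - real k) * ln s"
    using sum_lessThan_split[of k N "\<lambda>i. ln (max s (t i))"] assms(1) by (simp add: of_nat_diff)
  then have "\<delta> * (\<Sum>i<N. ln (max s (t i))) \<le> \<delta> * (k * ln r + (real N - real k) * ln s)"
    using assms(3) by (rule mult_left_mono)
  moreover have "\<delta> * k * ln r \<le> \<delta> * k * \<bar>ln r\<bar>" using assms(3) by (intro mult_left_mono) auto
  moreover have "x * ln s - \<delta> * (k * ln r + (real N - real k) * ln s) = - (E * ln s) - \<delta> * k * ln r"
    by (simp add: E_def algebra_simps)
  ultimately have "B \<le> log_profile x \<delta> N t s"
    using lsE unfolding log_profile_def by linarith
  with s that show ?thesis by blast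
qed

lemma ln_sum_comparable:
  fixes t L :: "nat \<Rightarrow> real"
  assumes "0 \<le> c" "0 \<le> \<delta>"
    and "\<And>i. i \<le> k \<Longrightarrow> 0 < t i" "\<And>i. i \<le> k \<Longrightarrow> t i \<le> L i" "\<And>i. i \<le> k \<Longrightarrow> L i \<le> 2 * t i"
  shows "c * ln (t k) + \<delta> * (\<Sum>i<k. ln (t i)) \<le> c * ln (L k) + \<delta> * (\<Sum>i<k. ln (L i))"
    and "c * ln (L k) + \<delta> * (\<Sum>i<k. ln (L i)) \<le> c * ln (t k) + \<delta> * (\<Sum>i<k. ln (t i)) + (c + k * \<delta>) * ln 2"
proof -
  have lo: "ln (t i) \<le> ln (L i)" and hi: "ln (L i) \<le> ln 2 + ln (t i)" if "i \<le> k" for i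
  proof -
    show "ln (t i) \<le> ln (L i)" using assms(3,4)[OF that] by simp
    have "ln (L i) \<le> ln (2 * t i)" using assms(3-5)[OF that] by simp
    then show "ln (L i) \<le> ln 2 + ln (t i)" using assms(3)[OF that] by (simp add: ln_mult)
  qed
  have "(\<Sum>i<k. ln (t i)) \<le> (\<Sum>i<k. ln (L i))" by (rule sum_mono) (simp add: lo)
  then show "c * ln (t k) + \<delta> * (\<Sum>i<k. ln (t i)) \<le> c * ln (L k) + \<delta> * (\<Sum>i<k. ln (L i))"
    using assms(1,2) lo[of k] by (intro add_mono mult_left_mono) auto
  have "(\<Sum>i<k. ln (L i)) \<le> (\<Sum>i<k. ln 2 + ln (t i))" by (rule sum_mono) (simp add: hi)
  then have "\<delta> * (\<Sum>i<k. ln (L i)) \<le> \<delta> * (k * ln 2 + (\<Sum>i<k. ln (t i)))"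
    using assms(2) by (simp add: sum.distrib mult_left_mono)
  moreover have "c * ln (L k) \<le> c * (ln 2 + ln (t k))"
    using assms(1) hi[of k] by (intro mult_left_mono) auto
  ultimately show "c * ln (L k) + \<delta> * (\<Sum>i<k. ln (L i)) \<le> c * ln (t k) + \<delta> * (\<Sum>i<k. ln (t i)) + (c + k * \<delta>) * ln 2"
    by (simp add: algebra_simps)
qed

section \<open>Sums over dyadic scales\<close>

lemma sum_power_le:
  fixes q :: real
  assumes "0 \<le> q" "q < 1"
  shows "(\<Sum>i<n. q ^ i) \<le> 1 / (1 - q)"
proof -
  have "(\<Sum>i<n. q ^ i) = (1 - q ^ n) / (1 - q)" using assms by (simp add: sum_gp_strict)
  also have "\<dots> \<le> 1 / (1 - q)" using assms by (intro divide_right_mono) auto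
  finally show ?thesis .
qed

lemma sum_power_dist_le:
  fixes q :: real
  assumes "0 \<le> q" "q < 1"
  shows "(\<Sum>j<n. q ^ (if j \<le> m then m - j else j - m)) \<le> 2 / (1 - q)"
proof -
  have "(\<Sum>j<n. q ^ (if j \<le> m then m - j else j - m))
      = (\<Sum>j\<in>{..<n} \<inter> {j. j \<le> m}. q ^ (m - j)) + (\<Sum>j\<in>{..<n} - {j. j \<le> m}. q ^ (j - m))"
    by (simp add: if_distrib sum.If_cases Diff_eq)
  moreover have "(\<Sum>j\<in>{..<n} \<inter> {j. j \<le> m}. q ^ (m - j)) \<le> 1 / (1 - q)"
  proof -
    have "(\<Sum>j\<in>{..<n} \<inter> {j. j \<le> m}. q ^ (m - j)) \<le> (\<Sum>j<Suc m. q ^ (m - j))"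
      by (rule sum_mono2) (use assms in auto)
    also have "\<dots> = (\<Sum>j<Suc m. q ^ j)"
      using sum.nat_diff_reindex[of "\<lambda>j. q ^ j" "Suc m"] by simp
    finally show ?thesis using sum_power_le[OF assms] by (rule order_trans)
  qed
  moreover have "(\<Sum>j\<in>{..<n} - {j. j \<le> m}. q ^ (j - m)) \<le> 1 / (1 - q)"
  proof -
    have "(\<Sum>j\<in>{..<n} - {j. j \<le> m}. q ^ (j - m)) \<le> (\<Sum>j\<in>{..<n} - {j. j \<le> m}. q ^ (j - Suc m))"
      using assms by (intro sum_mono power_decreasing) auto
    also have "\<dots> = (\<Sum>i\<in>(\<lambda>j. j - Suc m) ` ({..<n} - {j. j \<le> m}). q ^ i)"
      by (rule sum.reindex[symmetric, unfolded o_def]) (auto simp: inj_on_def)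
    also have "\<dots> \<le> (\<Sum>i<n. q ^ i)"
      by (rule sum_mono2) (use assms in auto)
    finally show ?thesis using sum_power_le[OF assms] by (rule order_trans)
  qed
  ultimately show ?thesis by simp
qed

definition dyadic_const :: "real \<Rightarrow> real" where
  "dyadic_const \<eta> = 2 / (exp (- \<eta> * ln 2) * (1 - exp (- \<eta> * ln 2)))"

lemma dyadic_const_pos: "0 < \<eta> \<Longrightarrow> 0 < dyadic_const \<eta>"
  unfolding dyadic_const_def by (intro divide_pos_pos mult_pos_pos) auto

text \<open>The scales \<open>2\<^sup>-\<^sup>j\<close> are \<open>ln 2\<close>-separated on the logarithmic axis, so a weight decaying
  like \<open>exp (-\<eta> |ln s - c|)\<close> away from any centre \<open>c\<close> has a uniformly bounded dyadic sum;
  comparing \<open>j\<close> with the integer part \<open>j\<^sub>0\<close> of \<open>c / ln 2\<close> reduces it to two geometric series.\<close>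
lemma sum_exp_dist_le:
  fixes \<eta> c :: real
  assumes "0 < \<eta>" "0 \<le> c"
  shows "(\<Sum>j<n. exp (- \<eta> * \<bar>c - real j * ln 2\<bar>)) \<le> dyadic_const \<eta>"
proof -
  define l :: real where "l = ln 2"
  have l: "0 < l" by (simp add: l_def)
  define q where "q = exp (- \<eta> * l)"
  have q: "0 < q" "q < 1" using assms l by (auto simp: q_def)
  define j0 where "j0 = nat \<lfloor>c / l\<rfloor>"
  have j0_floor: "real j0 = of_int \<lfloor>c / l\<rfloor>" using assms l by (simp add: j0_def)
  have "real j0 \<le> c / l" "c / l < real j0 + 1"
    unfolding j0_floor by linarith+
  then have j0: "real j0 * l \<le> c" "c < (real j0 + 1) * l"
    using l by (simp_all add: field_simps)
  define dd where "dd = (\<lambda>j::nat. if j \<le> j0 then j0 - j else j - j0)"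
  have "exp (- \<eta> * \<bar>c - real j * l\<bar>) \<le> (1 / q) * q ^ dd j" for j
  proof -
    have "(real (dd j) - 1) * l \<le> \<bar>c - real j * l\<bar>"
      using j0 l by (cases "j \<le> j0") (auto simp: dd_def of_nat_diff algebra_simps)
    then have "\<eta> * ((real (dd j) - 1) * l) \<le> \<eta> * \<bar>c - real j * l\<bar>"
      using assms(1) by (intro mult_left_mono) auto
    then have "exp (- \<eta> * \<bar>c - real j * l\<bar>) \<le> exp (real (dd j) * (- \<eta> * l) - (- \<eta> * l))"
      by (simp add: algebra_simps)
    also have "\<dots> = q ^ dd j / q"
      by (simp only: q_def exp_diff exp_of_nat_mult)
    finally show ?thesis by simp
  qed
  then have "(\<Sum>j<n. exp (- \<eta> * \<bar>c - real j * ln 2\<bar>)) \<le> (\<Sum>j<n. (1 / q) * q ^ dd j)"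
    by (intro sum_mono) (simp add: l_def)
  also have "\<dots> = (1 / q) * (\<Sum>j<n. q ^ (if j \<le> j0 then j0 - j else j - j0))"
    by (simp add: sum_distrib_left dd_def)
  also have "\<dots> \<le> (1 / q) * (2 / (1 - q))"
    using q by (intro mult_left_mono sum_power_dist_le) auto
  also have "\<dots> = dyadic_const \<eta>"
    by (simp add: q_def l_def dyadic_const_def)
  finally show ?thesis .
qed

lemma suminf_exp_le_dyadic_const:
  fixes d b \<eta> c :: real and F :: "nat \<Rightarrow> real"
  assumes "0 \<le> d" "0 < \<eta>" "0 \<le> c"
    and F: "\<And>j. F j \<le> b - \<eta> * \<bar>c - real j * ln 2\<bar>"
  shows "(\<Sum>j. ennreal (d * exp (F j))) \<le> ennreal (d * exp b * dyadic_const \<eta>)"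
proof (rule ennreal_suminf_bound_add[of _ 0, simplified])
  fix n
  have "(\<Sum>j<n. d * exp (F j)) \<le> (\<Sum>j<n. d * exp b * exp (- \<eta> * \<bar>c - real j * ln 2\<bar>))"
  proof (rule sum_mono)
    fix j
    have "exp (F j) \<le> exp b * exp (- \<eta> * \<bar>c - real j * ln 2\<bar>)"
      using F[of j] by (simp add: exp_add[symmetric])
    then show "d * exp (F j) \<le> d * exp b * exp (- \<eta> * \<bar>c - real j * ln 2\<bar>)"
      using assms(1) by (simp add: mult.assoc mult_left_mono)
  qed
  also have "\<dots> \<le> d * exp b * dyadic_const \<eta>"
    unfolding sum_distrib_left[symmetric] using assms
    by (intro mult_left_mono sum_exp_dist_le) auto
  finally show "(\<Sum>j<n. ennreal (d * exp (F j))) \<le> ennreal (d * exp b * dyadic_const \<eta>)"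
    using assms(1) by (simp add: ennreal_leI)
qed

section \<open>Area estimates in the plane\<close>

lemma emeasure_ball_complex: "0 \<le> r \<Longrightarrow> emeasure lborel (ball (c::complex) r) = ennreal (pi * r ^ 2)"
  using emeasure_ball[of r c] by (simp add: unit_ball_vol_2)

lemma emeasure_cball_complex: "0 \<le> r \<Longrightarrow> emeasure lborel (cball (c::complex) r) = ennreal (pi * r ^ 2)"
  using emeasure_cball[of r c] by (simp add: unit_ball_vol_2)

lemma emeasure_ball_minus_small_balls:
  fixes W :: "complex set"
  assumes "finite W" "0 < s" "0 < \<eta>" "real (card W) * \<eta>\<^sup>2 \<le> 1 / 2"
  shows "ennreal (pi * s\<^sup>2 / 2) \<le> emeasure lborel (ball a s - (\<Union>w\<in>W. ball w (\<eta> * s)))"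
proof -
  define U where "U = (\<Union>w\<in>W. ball w (\<eta> * s))"
  have U: "U \<in> sets lborel" unfolding U_def by (auto intro!: borel_open)
  have "emeasure lborel U \<le> (\<Sum>w\<in>W. emeasure lborel (ball w (\<eta> * s)))"
    unfolding U_def by (rule emeasure_subadditive_finite) (use assms(1) in auto)
  also have "\<dots> = ennreal (real (card W) * \<eta>\<^sup>2 * (pi * s\<^sup>2))"
    using assms(2,3) by (simp add: emeasure_ball_complex ennreal_of_nat_eq_real_of_nat
        power_mult_distrib ennreal_mult' mult_ac)
  also have "\<dots> \<le> ennreal (pi * s\<^sup>2 / 2)"
    using mult_right_mono[OF assms(4), of "pi * s\<^sup>2"] by (intro ennreal_leI) simp
  finally have "emeasure lborel U \<le> ennreal (pi * s\<^sup>2 / 2)" .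
  moreover have "ennreal (pi * s\<^sup>2) \<le> emeasure lborel (ball a s - U) + emeasure lborel U"
  proof -
    have "ennreal (pi * s\<^sup>2) = emeasure lborel (ball a s)"
      using assms(2) by (simp add: emeasure_ball_complex)
    also have "\<dots> \<le> emeasure lborel ((ball a s - U) \<union> U)"
      by (rule emeasure_mono) (use U in auto)
    also have "\<dots> \<le> emeasure lborel (ball a s - U) + emeasure lborel U"
      by (rule emeasure_subadditive) (use U in auto)
    finally show ?thesis .
  qed
  ultimately have "ennreal (pi * s\<^sup>2 / 2) + ennreal (pi * s\<^sup>2 / 2)
                     \<le> ennreal (pi * s\<^sup>2 / 2) + emeasure lborel (ball a s - U)"
    using assms(2) by (simp add: ennreal_plus[symmetric] add.commute order_trans add_left_mono)
  then show ?thesis unfolding U_def by simp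
qed

lemma nn_integral_ge_on_ball_minus_small_balls:
  fixes f :: "complex \<Rightarrow> real" and W :: "complex set"
  assumes "finite W" "0 < s" "0 < \<eta>" "real (card W) * \<eta>\<^sup>2 \<le> 1 / 2" "ball a s \<subseteq> A" "0 \<le> v"
    and bound: "\<And>z. z \<in> ball a s \<Longrightarrow> (\<And>w. w \<in> W \<Longrightarrow> \<eta> * s \<le> dist w z) \<Longrightarrow> v \<le> f z"
  shows "ennreal (v * (pi * s\<^sup>2 / 2)) \<le> set_nn_integral lborel A (\<lambda>z. ennreal (f z))"
proof -
  define E where "E = ball a s - (\<Union>w\<in>W. ball w (\<eta> * s))"
  have "open (\<Union>w\<in>W. ball w (\<eta> * s))" by auto
  then have E: "E \<in> sets lborel" unfolding E_def by (intro sets.Diff borel_open) auto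
  have "ennreal (v * (pi * s\<^sup>2 / 2)) = ennreal v * ennreal (pi * s\<^sup>2 / 2)"
    using assms(6) by (intro ennreal_mult) auto
  also have "\<dots> \<le> ennreal v * emeasure lborel E"
    unfolding E_def by (intro mult_left_mono emeasure_ball_minus_small_balls assms(1-4)) simp
  also have "\<dots> = (\<integral>\<^sup>+ z. ennreal v * indicator E z \<partial>lborel)"
    using E by (rule nn_integral_cmult_indicator[symmetric])
  also have "\<dots> \<le> (\<integral>\<^sup>+ z. ennreal (f z) * indicator A z \<partial>lborel)"
  proof (rule nn_integral_mono)
    fix z
    show "ennreal v * indicator E z \<le> ennreal (f z) * indicator A z"
    proof (cases "z \<in> E")
      case True
      then have "z \<in> ball a s" "\<And>w. w \<in> W \<Longrightarrow> \<eta> * s \<le> dist w z"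
        unfolding E_def by auto
      then have "v \<le> f z" "z \<in> A" using bound assms(5) by auto
      then show ?thesis using True by (simp add: ennreal_leI)
    qed simp
  qed
  finally show ?thesis .
qed

definition dyadic_annulus :: "complex \<Rightarrow> real \<Rightarrow> nat \<Rightarrow> complex set" where
  "dyadic_annulus a \<rho> j = cball a (\<rho> / 2 ^ j) - cball a (\<rho> / 2 ^ Suc j)"

lemma dyadic_annulus_sets [measurable]: "dyadic_annulus a \<rho> j \<in> sets lborel"
  unfolding dyadic_annulus_def by auto

lemma mem_dyadic_annulus:
  "z \<in> dyadic_annulus a \<rho> j \<longleftrightarrow> \<rho> / 2 ^ Suc j < cmod (z - a) \<and> cmod (z - a) \<le> \<rho> / 2 ^ j"
  by (auto simp: dyadic_annulus_def dist_norm norm_minus_commute)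

lemma emeasure_dyadic_annulus_le:
  "0 \<le> \<rho> \<Longrightarrow> emeasure lborel (dyadic_annulus a \<rho> j) \<le> ennreal (pi * (\<rho> / 2 ^ j)\<^sup>2)"
  using emeasure_mono[of "dyadic_annulus a \<rho> j" "cball a (\<rho> / 2 ^ j)" lborel]
  by (auto simp: dyadic_annulus_def emeasure_cball_complex)

lemma exists_dyadic_annulus:
  fixes r \<rho> :: real
  assumes "0 < r" "r \<le> \<rho>"
  obtains j where "\<rho> / 2 ^ Suc j < r" "r \<le> \<rho> / 2 ^ j"
proof -
  obtain n where "\<rho> / r < 2 ^ n" using real_arch_pow[of 2 "\<rho> / r"] by auto
  then have ex: "\<exists>j. \<rho> / 2 ^ Suc j < r"
    using assms by (intro exI[of _ n]) (simp add: field_simps)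
  define j where "j = (LEAST j. \<rho> / 2 ^ Suc j < r)"
  have "\<rho> / 2 ^ Suc j < r" unfolding j_def by (rule LeastI_ex[OF ex])
  moreover have "r \<le> \<rho> / 2 ^ j"
  proof (cases j)
    case (Suc i)
    then have "\<not> \<rho> / 2 ^ Suc i < r"
      using not_less_Least[of i "\<lambda>j. \<rho> / 2 ^ Suc j < r"] j_def by auto
    then show ?thesis using Suc by simp
  qed (use assms in simp)
  ultimately show ?thesis using that by blast
qed

lemma k_index_eq:
  assumes "0 < \<delta>" "k < N"
    and "(real N - real k - 1) * \<delta> < real \<nu> * \<epsilon> + 2" "real \<nu> * \<epsilon> + 2 < (real N - real k) * \<delta>"
  shows "k_index \<epsilon> \<delta> N \<nu> = int k"
proof -
  define x where "x = real \<nu> * \<epsilon> + 2"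
  have floor_eq: "\<lfloor>x / \<delta>\<rfloor> = int N - k' - 1"
    if "real_of_int (int N - k' - 1) * \<delta> < x" "x < real_of_int (int N - k') * \<delta>" for k'
    using that assms(1) by (intro floor_unique) (simp_all add: field_simps)
  have "real N * \<delta> \<ge> (real N - real k) * \<delta>" using assms(1) by (simp add: mult_right_mono)
  then have "\<not> real N * \<delta> < x" using assms(4) by (simp add: x_def)
  moreover have "(THE k'::int. 0 \<le> k' \<and> k' \<le> int N - 1 \<and>
        real_of_int (int N - k' - 1) * \<delta> < x \<and> x < real_of_int (int N - k') * \<delta>) = int k"
  proof (rule the_equality)
    show "0 \<le> int k \<and> int k \<le> int N - 1 \<and> real_of_int (int N - int k - 1) * \<delta> < x
          \<and> x < real_of_int (int N - int k) * \<delta>"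
      using assms by (simp add: x_def)
    then show "k' = int k"
      if "0 \<le> k' \<and> k' \<le> int N - 1 \<and> real_of_int (int N - k' - 1) * \<delta> < x
          \<and> x < real_of_int (int N - k') * \<delta>" for k'
      using that floor_eq[of k'] floor_eq[of "int k"] by simp
  qed
  ultimately show ?thesis unfolding k_index_def x_def by simp
qed

lemma exists_k_index:
  assumes "0 \<le> \<delta>" "0 \<le> \<epsilon>" "\<not> real N * \<delta> < real \<nu> * \<epsilon> + 2"
    and nonres: "\<And>j. j \<le> N \<Longrightarrow> real \<nu> * \<epsilon> + 2 - real j * \<delta> \<noteq> 0"
  obtains k where "k < N" "(real N - real k - 1) * \<delta> < real \<nu> * \<epsilon> + 2"
    "real \<nu> * \<epsilon> + 2 < (real N - real k) * \<delta>"
proof -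
  define x where "x = real \<nu> * \<epsilon> + 2"
  have "0 \<le> real \<nu> * \<epsilon>" using assms(2) by simp
  then have x: "0 < x" by (simp add: x_def)
  have xN: "x < real N * \<delta>" using assms(3) nonres[of N] by (auto simp: x_def)
  then have \<delta>: "0 < \<delta>" using x assms(1) by (cases "\<delta> = 0") auto
  define j where "j = nat \<lfloor>x / \<delta>\<rfloor>"
  have "real j = of_int \<lfloor>x / \<delta>\<rfloor>" using x \<delta> by (simp add: j_def)
  then have "real j \<le> x / \<delta>" "x / \<delta> < real j + 1" by linarith+
  then have j: "real j * \<delta> \<le> x" "x < (real j + 1) * \<delta>" using \<delta> by (simp_all add: field_simps)
  have jN: "j < N"
    using j(1) xN \<delta> by (metis le_less_trans mult_less_cancel_right_pos of_nat_less_iff)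
  have "x - real j * \<delta> \<noteq> 0" using nonres[of j] jN by (simp add: x_def)
  then have "real j * \<delta> < x" using j(1) by linarith
  moreover have "real N - real (N - 1 - j) - 1 = real j" "real N - real (N - 1 - j) = real j + 1"
    using jN by (simp_all add: of_nat_diff)
  ultimately have "(real N - real (N - 1 - j) - 1) * \<delta> < x" "x < (real N - real (N - 1 - j)) * \<delta>"
    using j(2) by (simp_all add: add.commute)
  moreover have "N - 1 - j < N" using jN by simp
  ultimately show ?thesis using that unfolding x_def by blast
qed

lemma Phi_top:
  assumes "real (size S) * \<delta> < real \<nu> * \<epsilon> + 2"
  shows "Phi \<epsilon> \<delta> \<Lambda> S \<nu> (k_index \<epsilon> \<delta> (size S) \<nu>) a
           = \<Lambda> powr (real (size S) * \<delta> - (real \<nu> * \<epsilon> + 2))"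
  using assms by (simp add: k_index_def Phi_def)

lemma Phi_eq_exp:
  assumes "\<And>i. i \<le> k \<Longrightarrow> 0 < cluster_scale S i a"
  shows "Phi \<epsilon> \<delta> \<Lambda> S \<nu> (int k) a
           = exp (((real (size S) - real k) * \<delta> - (real \<nu> * \<epsilon> + 2)) * ln (cluster_scale S k a)
                  + \<delta> * (\<Sum>i<k. ln (cluster_scale S i a)))"
proof -
  have "(\<Prod>i<k. cluster_scale S i a powr \<delta>) = (\<Prod>i<k. exp (\<delta> * ln (cluster_scale S i a)))"
  proof (intro prod.cong refl)
    fix i assume "i \<in> {..<k}"
    then have "0 < cluster_scale S i a" using assms by simp
    then show "cluster_scale S i a powr \<delta> = exp (\<delta> * ln (cluster_scale S i a))"
      by (simp add: powr_def mult.commute)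
  qed
  also have "\<dots> = exp (\<Sum>i<k. \<delta> * ln (cluster_scale S i a))" by (simp add: exp_sum)
  finally have "(\<Prod>i<k. cluster_scale S i a powr \<delta>) = exp (\<Sum>i<k. \<delta> * ln (cluster_scale S i a))" .
  then show ?thesis using assms[of k]
    by (simp add: Phi_def powr_def exp_add sum_distrib_left mult.commute)
qed

lemma Phi_eq_0:
  assumes "cluster_scale S k a = 0" "real \<nu> * \<epsilon> + 2 < (real (size S) - real k) * \<delta>"
  shows "Phi \<epsilon> \<delta> \<Lambda> S \<nu> (int k) a = 0"
  using assms by (simp add: Phi_def)

locale nonresonant_root =
  fixes S :: "complex multiset" and a :: complex and \<Lambda> \<epsilon> \<delta> \<eta> :: real and \<nu> M :: nat
  assumes root: "a \<in># S" and roots_in_ball: "set_mset S \<subseteq> ball 0 (\<Lambda> / 2)"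
    and radius_pos: "0 < \<Lambda>" and eps_nonneg: "0 \<le> \<epsilon>" and delta_nonneg: "0 \<le> \<delta>"
    and margin_pos: "0 < \<eta>" and nu_le: "\<nu> \<le> M"
    and margin: "\<And>j. j \<le> size S \<Longrightarrow> \<eta> \<le> \<bar>real \<nu> * \<epsilon> + 2 - real j * \<delta>\<bar>"
begin

abbreviation "N \<equiv> size S"
abbreviation "\<xi> \<equiv> real \<nu> * \<epsilon> + 2"
abbreviation "\<tau> \<equiv> nth_largest_dist S a"
abbreviation "L \<equiv> \<lambda>i. cluster_scale S i a"
abbreviation "F \<equiv> log_profile \<xi> \<delta> N \<tau>"
abbreviation "\<Phi> \<equiv> Phi \<epsilon> \<delta> \<Lambda> S \<nu> (k_index \<epsilon> \<delta> N \<nu>) a"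

lemma xi_nonneg: "0 \<le> \<xi>"
  using eps_nonneg by simp

lemma xi_le: "\<xi> \<le> real M * \<epsilon> + 2"
  using nu_le eps_nonneg by (simp add: mult_right_mono)

lemma tau_antimono: "i \<le> j \<Longrightarrow> j < N \<Longrightarrow> \<tau> j \<le> \<tau> i"
  by (rule nth_largest_dist_antimono)

lemma tau_nonneg: "i < N \<Longrightarrow> 0 \<le> \<tau> i"
  by (rule nth_largest_dist_nonneg)

lemma tau_less: "i < N \<Longrightarrow> \<tau> i < \<Lambda>"
  using nth_largest_dist_less[OF roots_in_ball root] .

lemma tau_le_L: "i < N \<Longrightarrow> \<tau> i \<le> L i"
  using nth_largest_dist_le_cluster_scale[OF root] .

lemma L_le_tau: "i < N \<Longrightarrow> L i \<le> 2 * \<tau> i"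
  using cluster_scale_le_nth_largest_dist[OF root] .

text \<open>The three shapes of \<open>\<Phi>\<close>, according to where \<open>F\<close> peaks: at the top scale \<open>\<Lambda>\<close>
  (\<open>k\<^sub>\<nu> = -1\<close>), at \<open>\<tau> k\<close> for \<open>k = k\<^sub>\<nu>\<close>, or nowhere, when \<open>\<tau> k = 0\<close> because \<open>N - k\<close>
  roots coincide with \<open>a\<close>.\<close>
lemma Phi_cases:
  obtains (top) "real N * \<delta> < \<xi>" "\<eta> \<le> \<xi> - real N * \<delta>" "\<Phi> = exp ((real N * \<delta> - \<xi>) * ln \<Lambda>)"
  | (cluster) k where "k < N" "0 < \<tau> k" "\<eta> \<le> \<xi> - (real N - real k - 1) * \<delta>"
      "\<eta> \<le> (real N - real k) * \<delta> - \<xi>"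
      "\<Phi> = exp (((real N - real k) * \<delta> - \<xi>) * ln (L k) + \<delta> * (\<Sum>i<k. ln (L i)))"
  | (degenerate) k where "k < N" "\<tau> k = 0" "\<eta> \<le> (real N - real k) * \<delta> - \<xi>" "\<Phi> = 0"
proof (cases "real N * \<delta> < \<xi>")
  case True
  then show ?thesis
    using top margin[of N] Phi_top[OF True] radius_pos by (simp add: powr_def mult.commute)
next
  case False
  have "\<xi> - real j * \<delta> \<noteq> 0" if "j \<le> N" for j
    using margin[OF that] margin_pos by auto
  then obtain k where k: "k < N" "(real N - real k - 1) * \<delta> < \<xi>" "\<xi> < (real N - real k) * \<delta>"
    using exists_k_index[OF delta_nonneg eps_nonneg False] by blast
  have "0 < \<delta>" using k(3) xi_nonneg delta_nonneg by (cases "\<delta> = 0") auto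
  then have k_index: "k_index \<epsilon> \<delta> N \<nu> = int k" using k by (rule k_index_eq)
  have "\<eta> \<le> \<bar>\<xi> - real (N - k - 1) * \<delta>\<bar>" "\<eta> \<le> \<bar>\<xi> - real (N - k) * \<delta>\<bar>"
    by (intro margin; simp)+
  moreover have "real (N - k - 1) = real N - real k - 1" "real (N - k) = real N - real k"
    using k(1) by (simp_all add: of_nat_diff)
  ultimately have "\<eta> \<le> \<bar>\<xi> - (real N - real k - 1) * \<delta>\<bar>" "\<eta> \<le> \<bar>\<xi> - (real N - real k) * \<delta>\<bar>"
    by (simp_all only:)
  then have margins: "\<eta> \<le> \<xi> - (real N - real k - 1) * \<delta>" "\<eta> \<le> (real N - real k) * \<delta> - \<xi>"
    using k(2,3) by (simp_all add: abs_of_pos abs_of_neg)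
  show ?thesis
  proof (cases "\<tau> k = 0")
    case True
    then have "L k = 0" using tau_le_L[OF k(1)] L_le_tau[OF k(1)] by simp
    then have "\<Phi> = 0" unfolding k_index using k(3) by (rule Phi_eq_0)
    then show ?thesis by (rule degenerate[OF k(1) True margins(2)])
  next
    case False
    then have "0 < \<tau> k" using tau_nonneg[OF k(1)] by simp
    have "0 < L i" if "i \<le> k" for i
      using tau_antimono[OF that k(1)] tau_le_L[of i] that k(1) \<open>0 < \<tau> k\<close> by simp
    then have "\<Phi> = exp (((real N - real k) * \<delta> - \<xi>) * ln (L k) + \<delta> * (\<Sum>i<k. ln (L i)))"
      unfolding k_index by (rule Phi_eq_exp)
    with \<open>0 < \<tau> k\<close> show ?thesis by (rule cluster[OF k(1) _ margins])
  qed
qed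


lemma Phi_nonneg: "0 \<le> \<Phi>"
  by (cases rule: Phi_cases) auto

lemma tau_le: "i < N \<Longrightarrow> \<tau> i \<le> \<Lambda>"
  using tau_less[of i] by simp

lemma tau_pos_below: "k < N \<Longrightarrow> 0 < \<tau> k \<Longrightarrow> i \<le> k \<Longrightarrow> 0 < \<tau> i"
  using tau_antimono[of i k] by simp

lemma log_profile_le_at_peak:
  assumes "0 < \<Phi>"
  obtains p where "0 < p" "p \<le> 2 * \<Lambda>"
    "\<And>s. 0 < s \<Longrightarrow> s \<le> 2 * \<Lambda> \<Longrightarrow>
       F s + ln \<Phi> \<le> (real M * \<epsilon> + 2 + real N * \<delta>) * ln 2 - \<eta> * \<bar>ln s - ln p\<bar>"
proof (cases rule: Phi_cases)
  case top
  show ?thesis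
  proof (rule that[of "2 * \<Lambda>"])
    fix s assume s: "0 < s" "s \<le> 2 * \<Lambda>"
    have "F s + (real N * \<delta> - \<xi>) * ln \<Lambda> \<le> \<xi> * ln 2 - \<eta> * \<bar>ln s - ln (2 * \<Lambda>)\<bar>"
      by (rule log_profile_le_top) (use s top delta_nonneg in auto)
    moreover have "\<xi> * ln 2 \<le> (real M * \<epsilon> + 2 + real N * \<delta>) * ln 2"
      using xi_le delta_nonneg by (intro mult_right_mono) (auto intro: add_increasing2)
    moreover have "ln \<Phi> = (real N * \<delta> - \<xi>) * ln \<Lambda>" using top(3) by simp
    ultimately show "F s + ln \<Phi> \<le> (real M * \<epsilon> + 2 + real N * \<delta>) * ln 2 - \<eta> * \<bar>ln s - ln (2 * \<Lambda>)\<bar>"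
      by linarith
  qed (use radius_pos in auto)
next
  case (cluster k)
  show ?thesis
  proof (rule that[of "\<tau> k"])
    fix s assume s: "0 < s" "s \<le> 2 * \<Lambda>"
    have "F s \<le> (\<xi> - (real N - real k) * \<delta>) * ln (\<tau> k) - \<delta> * (\<Sum>i<k. ln (\<tau> i))
                - \<eta> * \<bar>ln s - ln (\<tau> k)\<bar>"
      by (rule log_profile_le_peak) (use cluster s delta_nonneg tau_antimono in auto)
    moreover have "((real N - real k) * \<delta> - \<xi>) * ln (L k) + \<delta> * (\<Sum>i<k. ln (L i))
        \<le> ((real N - real k) * \<delta> - \<xi>) * ln (\<tau> k) + \<delta> * (\<Sum>i<k. ln (\<tau> i))
          + ((real N - real k) * \<delta> - \<xi> + k * \<delta>) * ln 2"
      by (rule ln_sum_comparable(2))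
        (use cluster margin_pos delta_nonneg tau_pos_below tau_le_L L_le_tau in auto)
    moreover have "(real N - real k) * \<delta> - \<xi> + k * \<delta> \<le> real M * \<epsilon> + 2 + real N * \<delta>"
      using xi_nonneg mult_nonneg_nonneg[OF of_nat_0_le_iff eps_nonneg, of M] by (simp add: algebra_simps)
    then have "((real N - real k) * \<delta> - \<xi> + k * \<delta>) * ln 2 \<le> (real M * \<epsilon> + 2 + real N * \<delta>) * ln 2"
      by (intro mult_right_mono) auto
    moreover have "ln \<Phi> = ((real N - real k) * \<delta> - \<xi>) * ln (L k) + \<delta> * (\<Sum>i<k. ln (L i))"
      using cluster(5) by simp
    moreover have "(\<xi> - (real N - real k) * \<delta>) * ln (\<tau> k) = - (((real N - real k) * \<delta> - \<xi>) * ln (\<tau> k))"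
      by (simp add: algebra_simps)
    ultimately show "F s + ln \<Phi> \<le> (real M * \<epsilon> + 2 + real N * \<delta>) * ln 2 - \<eta> * \<bar>ln s - ln (\<tau> k)\<bar>"
      by linarith
  qed (use cluster tau_less[of k] radius_pos in auto)
qed (use assms in simp)

lemma log_profile_ge_near_peak:
  assumes "0 < \<Phi>"
  obtains s where "0 < s" "s \<le> \<Lambda> / 4" "- ((real M * \<epsilon> + 2) * ln 4) \<le> F s + ln \<Phi>"
proof -
  obtain s where s: "0 < s" "s \<le> \<Lambda> / 4" "- (\<xi> * ln 4) \<le> F s + ln \<Phi>"
  proof (cases rule: Phi_cases)
    case top
    have "\<xi> * ln (\<Lambda> / 4) - \<delta> * ((\<Sum>i<0. ln (\<tau> i)) + (real N - real 0) * ln \<Lambda>) \<le> F (\<Lambda> / 4)"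
      by (rule log_profile_ge) (use radius_pos delta_nonneg tau_le in auto)
    then have "- (\<xi> * ln 4) \<le> F (\<Lambda> / 4) + ln \<Phi>"
      using top(3) radius_pos by (simp add: ln_div algebra_simps)
    then show ?thesis using that[of "\<Lambda> / 4"] radius_pos by simp
  next
    case (cluster k)
    have large: "\<tau> k / 4 \<le> \<tau> i" if "i < k" for i
      using tau_antimono[of i k] that cluster(1,2) by simp
    have "\<xi> * ln (\<tau> k / 4) - \<delta> * ((\<Sum>i<k. ln (\<tau> i)) + (real N - real k) * ln (\<tau> k)) \<le> F (\<tau> k / 4)"
      by (rule log_profile_ge)
        (use large cluster delta_nonneg tau_antimono[of k] in auto)
    moreover have "((real N - real k) * \<delta> - \<xi>) * ln (\<tau> k) + \<delta> * (\<Sum>i<k. ln (\<tau> i))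
        \<le> ((real N - real k) * \<delta> - \<xi>) * ln (L k) + \<delta> * (\<Sum>i<k. ln (L i))"
      by (rule ln_sum_comparable(1))
        (use cluster margin_pos delta_nonneg tau_pos_below tau_le_L L_le_tau in auto)
    ultimately have "- (\<xi> * ln 4) \<le> F (\<tau> k / 4) + ln \<Phi>"
      using cluster(2,5) by (simp add: ln_div algebra_simps)
    then show ?thesis using that[of "\<tau> k / 4"] cluster(1,2) tau_less[of k] by simp
  qed (use assms in simp)
  moreover have "\<xi> * ln 4 \<le> (real M * \<epsilon> + 2) * ln 4"
    using xi_le by (intro mult_right_mono) auto
  ultimately show ?thesis using that[of s] by linarith
qed

lemma log_profile_unbounded_if_Phi_eq_0:
  assumes "\<Phi> = 0"
  obtains s where "0 < s" "s \<le> \<Lambda> / 4" "B \<le> F s"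
proof (cases rule: Phi_cases)
  case (degenerate k)
  show ?thesis
    by (rule log_profile_unbounded[where \<rho> = "\<Lambda> / 4" and r = \<Lambda> and t = \<tau>])
      (use degenerate margin_pos delta_nonneg radius_pos tau_antimono tau_le that in auto)
qed (use assms in auto)

lemma dyadic_sum_le_inverse_Phi:
  assumes "0 \<le> d"
  shows "(\<Sum>j. ennreal (d * exp (F (2 * \<Lambda> / 2 ^ j))))
           \<le> ennreal (2 powr (real M * \<epsilon> + 2 + real N * \<delta>) * dyadic_const \<eta> * d) / ennreal \<Phi>"
proof (cases "\<Phi> = 0")
  case True
  show ?thesis
  proof (cases "d = 0")
    case False
    then have "0 < 2 powr (real M * \<epsilon> + 2 + real N * \<delta>) * dyadic_const \<eta> * d"
      using assms dyadic_const_pos[OF margin_pos] by simp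
    then show ?thesis using True by (simp add: ennreal_eq_0_iff)
  qed simp
next
  case False
  then have \<Phi>: "0 < \<Phi>" using Phi_nonneg by simp
  obtain p where p: "0 < p" "p \<le> 2 * \<Lambda>"
    "\<And>s. 0 < s \<Longrightarrow> s \<le> 2 * \<Lambda> \<Longrightarrow>
       F s + ln \<Phi> \<le> (real M * \<epsilon> + 2 + real N * \<delta>) * ln 2 - \<eta> * \<bar>ln s - ln p\<bar>"
    using log_profile_le_at_peak[OF \<Phi>] by blast
  define b where "b = (real M * \<epsilon> + 2 + real N * \<delta>) * ln 2 - ln \<Phi>"
  have "(\<Sum>j. ennreal (d * exp (F (2 * \<Lambda> / 2 ^ j)))) \<le> ennreal (d * exp b * dyadic_const \<eta>)"
  proof (rule suminf_exp_le_dyadic_const[OF assms margin_pos])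
    show "0 \<le> ln (2 * \<Lambda>) - ln p" using p by simp
    fix j
    have "0 < 2 * \<Lambda> / 2 ^ j" "2 * \<Lambda> / 2 ^ j \<le> 2 * \<Lambda>"
      using radius_pos by (simp_all add: field_simps)
    then have "F (2 * \<Lambda> / 2 ^ j) + ln \<Phi> \<le> (real M * \<epsilon> + 2 + real N * \<delta>) * ln 2
                 - \<eta> * \<bar>ln (2 * \<Lambda> / 2 ^ j) - ln p\<bar>"
      by (rule p(3))
    moreover have "ln (2 * \<Lambda> / 2 ^ j) - ln p = ln (2 * \<Lambda>) - ln p - real j * ln 2"
      using radius_pos by (simp add: ln_div ln_realpow)
    ultimately show "F (2 * \<Lambda> / 2 ^ j) \<le> b - \<eta> * \<bar>ln (2 * \<Lambda>) - ln p - real j * ln 2\<bar>"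
      unfolding b_def by simp
  qed
  also have "d * exp b * dyadic_const \<eta> = 2 powr (real M * \<epsilon> + 2 + real N * \<delta>) * dyadic_const \<eta> * d / \<Phi>"
    using \<Phi> by (simp add: b_def exp_diff powr_def)
  also have "ennreal \<dots> = ennreal (2 powr (real M * \<epsilon> + 2 + real N * \<delta>) * dyadic_const \<eta> * d) / ennreal \<Phi>"
    using \<Phi> assms dyadic_const_pos[OF margin_pos] by (intro divide_ennreal[symmetric]) auto
  finally show ?thesis .
qed

lemma inverse_Phi_le:
  assumes "0 < d" and lower: "\<And>s. 0 < s \<Longrightarrow> s \<le> \<Lambda> / 4 \<Longrightarrow> ennreal (d * exp (F s)) \<le> I"
  shows "ennreal (4 powr - (real M * \<epsilon> + 2) * d) / ennreal \<Phi> \<le> I"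
proof (cases "\<Phi> = 0")
  case True
  have "I = \<infinity>"
  proof (rule ccontr)
    assume "I \<noteq> \<infinity>"
    then obtain i where i: "I = ennreal i" "0 \<le> i" by (cases I rule: ennreal_cases) auto
    obtain s where s: "0 < s" "s \<le> \<Lambda> / 4" "ln ((i + 1) / d) \<le> F s"
      using log_profile_unbounded_if_Phi_eq_0[OF True] by blast
    have "(i + 1) / d \<le> exp (F s)"
      using s(3) i(2) assms(1) by (metis exp_le_cancel_iff exp_ln divide_pos_pos add_nonneg_pos zero_less_one)
    then have "i + 1 \<le> d * exp (F s)" using assms(1) by (simp add: field_simps)
    then have "ennreal (i + 1) \<le> I"
      using lower[OF s(1,2)] by (meson ennreal_leI order.trans)
    then show False using i by simp
  qed
  then show ?thesis by simp
next
  case False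
  then have \<Phi>: "0 < \<Phi>" using Phi_nonneg by simp
  obtain s where s: "0 < s" "s \<le> \<Lambda> / 4" "- ((real M * \<epsilon> + 2) * ln 4) \<le> F s + ln \<Phi>"
    using log_profile_ge_near_peak[OF \<Phi>] by blast
  have "(4::real) powr - (real M * \<epsilon> + 2) = exp (- ((real M * \<epsilon> + 2) * ln 4))"
    by (simp add: powr_def algebra_simps)
  then have "4 powr - (real M * \<epsilon> + 2) * d / \<Phi> = d * exp (- ((real M * \<epsilon> + 2) * ln 4) - ln \<Phi>)"
    using \<Phi> by (simp add: exp_diff)
  also have "\<dots> \<le> d * exp (F s)"
    using s(3) assms(1) by (intro mult_left_mono) auto
  finally have "ennreal (4 powr - (real M * \<epsilon> + 2) * d / \<Phi>) \<le> I"
    using lower[OF s(1,2)] by (meson ennreal_leI order.trans)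
  then show ?thesis
    using \<Phi> assms(1) by (simp add: divide_ennreal)
qed

end

section \<open>Upper bound for the integral\<close>

lemma powr_sum_le:
  fixes x :: "nat \<Rightarrow> real"
  assumes "\<And>\<nu>. 0 \<le> x \<nu>" "0 \<le> \<epsilon>"
  shows "(\<Sum>\<nu>\<le>M. x \<nu>) powr \<epsilon> \<le> (real M + 1) powr \<epsilon> * (\<Sum>\<nu>\<le>M. x \<nu> powr \<epsilon>)"
proof -
  obtain \<mu> where \<mu>: "\<mu> \<le> M" "\<And>\<nu>. \<nu> \<le> M \<Longrightarrow> x \<nu> \<le> x \<mu>"
    using Max_in[of "x ` {..M}"] Max_ge[of "x ` {..M}"] by fastforce
  have "(\<Sum>\<nu>\<le>M. x \<nu>) \<le> (real M + 1) * x \<mu>"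
    using sum_bounded_above[of "{..M}" x "x \<mu>"] \<mu>(2) by (simp add: add.commute)
  then have "(\<Sum>\<nu>\<le>M. x \<nu>) powr \<epsilon> \<le> ((real M + 1) * x \<mu>) powr \<epsilon>"
    using assms by (intro powr_mono2) (auto intro: sum_nonneg)
  also have "\<dots> = (real M + 1) powr \<epsilon> * x \<mu> powr \<epsilon>"
    using assms(1) by (simp add: powr_mult)
  also have "\<dots> \<le> (real M + 1) powr \<epsilon> * (\<Sum>\<nu>\<le>M. x \<nu> powr \<epsilon>)"
    using \<mu>(1) by (intro mult_left_mono member_le_sum[where f = "\<lambda>\<nu>. x \<nu> powr \<epsilon>"]) auto
  finally show ?thesis .
qed

definition taylor_weight :: "complex poly \<Rightarrow> complex \<Rightarrow> real \<Rightarrow> nat \<Rightarrow> real" where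
  "taylor_weight P a \<epsilon> \<nu> = (cmod (poly ((pderiv ^^ \<nu>) P) a) / fact \<nu>) powr \<epsilon>"

lemma norm_poly_powr_le_taylor_weights:
  fixes P :: "complex poly"
  assumes "degree P = M" "cmod (z - a) \<le> s" "0 < s" "0 \<le> \<epsilon>"
  shows "cmod (poly P z) powr \<epsilon> \<le> (real M + 1) powr \<epsilon> * (\<Sum>\<nu>\<le>M. taylor_weight P a \<epsilon> \<nu> * s powr (real \<nu> * \<epsilon>))"
proof -
  define c where "c = (\<lambda>\<nu>. cmod (poly ((pderiv ^^ \<nu>) P) a) / fact \<nu>)"
  have "cmod (poly P z) \<le> (\<Sum>\<nu>\<le>M. c \<nu> * cmod (z - a) ^ \<nu>)"
    using norm_poly_le_Taylor_sum[of P z a] assms(1) by (simp add: c_def)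
  also have "\<dots> \<le> (\<Sum>\<nu>\<le>M. c \<nu> * s ^ \<nu>)"
    using assms(2) by (intro sum_mono mult_left_mono power_mono) (auto simp: c_def)
  finally have "cmod (poly P z) powr \<epsilon> \<le> (\<Sum>\<nu>\<le>M. c \<nu> * s ^ \<nu>) powr \<epsilon>"
    using assms(4) by (intro powr_mono2) auto
  also have "\<dots> \<le> (real M + 1) powr \<epsilon> * (\<Sum>\<nu>\<le>M. (c \<nu> * s ^ \<nu>) powr \<epsilon>)"
    using assms(3,4) by (intro powr_sum_le) (auto simp: c_def)
  also have "(\<Sum>\<nu>\<le>M. (c \<nu> * s ^ \<nu>) powr \<epsilon>) = (\<Sum>\<nu>\<le>M. taylor_weight P a \<epsilon> \<nu> * s powr (real \<nu> * \<epsilon>))"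
  proof (intro sum.cong refl)
    fix \<nu>
    have "0 \<le> c \<nu>" by (simp add: c_def)
    then have "(c \<nu> * s ^ \<nu>) powr \<epsilon> = c \<nu> powr \<epsilon> * (s ^ \<nu>) powr \<epsilon>"
      using assms(3) by (simp add: powr_mult)
    also have "(s ^ \<nu>) powr \<epsilon> = s powr (real \<nu> * \<epsilon>)"
      using assms(3) by (simp add: powr_realpow[symmetric] powr_powr)
    finally show "(c \<nu> * s ^ \<nu>) powr \<epsilon> = taylor_weight P a \<epsilon> \<nu> * s powr (real \<nu> * \<epsilon>)"
      by (simp add: taylor_weight_def c_def)
  qed
  finally show ?thesis .
qed

lemma root_dist_prod_le_norm_poly:
  fixes Q :: "complex poly"
  assumes "lead_coeff Q = 1" "a \<in># proots Q"
    and nearest: "\<And>b. b \<in># proots Q \<Longrightarrow> cmod (z - a) \<le> cmod (z - b)"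
    and "cmod (z - a) \<le> s" "s \<le> 2 * cmod (z - a)"
  shows "root_dist_prod (proots Q) a s \<le> 4 ^ degree Q * cmod (poly Q z)"
proof -
  define S where "S = proots Q"
  have "root_dist_prod S a s \<le> root_dist_prod S a (2 * cmod (z - a))"
    using assms(4,5) by (intro root_dist_prod_mono) auto
  also have "\<dots> \<le> 2 ^ size S * root_dist_prod S a (cmod (z - a))"
    by (rule root_dist_prod_double) simp
  also have "\<dots> \<le> 2 ^ size S * (2 ^ size S * (\<Prod>b\<in>#S. cmod (z - b)))"
    using root_dist_prod_le_prod_dist[of S z a] nearest by (simp add: S_def)
  also have "\<dots> = 4 ^ degree Q * cmod (poly Q z)"
    using assms(1) by (simp add: S_def norm_poly_eq_prod_proots size_proots_complex
        flip: power_mult_distrib)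
  finally show ?thesis unfolding S_def .
qed

lemma integrand_le_at_nearest_root:
  fixes P Q :: "complex poly"
  assumes "degree P = M" "lead_coeff Q = 1" "0 < degree Q" "0 < \<Lambda>"
    and roots: "set_mset (proots Q) \<subseteq> ball 0 (\<Lambda> / 2)"
    and "0 \<le> \<epsilon>" "0 \<le> \<delta>" "z \<in> ball 0 \<Lambda>" "poly Q z \<noteq> 0"
  obtains a j where "a \<in># proots Q" "z \<in> dyadic_annulus a (2 * \<Lambda>) j"
    "cmod (poly P z) powr \<epsilon> / cmod (poly Q z) powr \<delta>
       \<le> (real M + 1) powr \<epsilon> * (4 ^ degree Q) powr \<delta>
          * (\<Sum>\<nu>\<le>M. taylor_weight P a \<epsilon> \<nu> * (2 * \<Lambda> / 2 ^ j) powr (real \<nu> * \<epsilon>))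
          / root_dist_prod (proots Q) a (2 * \<Lambda> / 2 ^ j) powr \<delta>"
proof -
  have "proots Q \<noteq> {#}" using assms(3) by (simp add: size_proots_complex flip: size_eq_0_iff_empty)
  then obtain a where a: "a \<in># proots Q" "\<And>b. b \<in># proots Q \<Longrightarrow> cmod (z - a) \<le> cmod (z - b)"
    using Min_in[of "(\<lambda>b. cmod (z - b)) ` set_mset (proots Q)"]
      Min_le[of "(\<lambda>b. cmod (z - b)) ` set_mset (proots Q)"] by fastforce
  define r where "r = cmod (z - a)"
  have "Q \<noteq> 0" using assms(2) by auto
  then have "z \<noteq> a" using a(1) assms(9) by auto
  then have r: "0 < r" by (simp add: r_def)
  have "cmod a < \<Lambda> / 2" "cmod z < \<Lambda>" using a(1) roots assms(8) by auto
  then have "r \<le> 2 * \<Lambda>" using norm_triangle_ineq4[of z a] assms(4) unfolding r_def by linarith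
  then obtain j where j: "2 * \<Lambda> / 2 ^ Suc j < r" "r \<le> 2 * \<Lambda> / 2 ^ j"
    using exists_dyadic_annulus[OF r] by blast
  define s where "s = 2 * \<Lambda> / 2 ^ j"
  have s: "0 < s" "r \<le> s" "s \<le> 2 * r" using assms(4) j by (simp_all add: s_def field_simps)
  have g: "0 < root_dist_prod (proots Q) a s" using root_dist_prod_pos[OF s(1)] .
  have "root_dist_prod (proots Q) a s / 4 ^ degree Q \<le> cmod (poly Q z)"
    using root_dist_prod_le_norm_poly[OF assms(2) a, of s] s by (simp add: r_def field_simps)
  then have "(root_dist_prod (proots Q) a s / 4 ^ degree Q) powr \<delta> \<le> cmod (poly Q z) powr \<delta>"
    using assms(7) g by (intro powr_mono2) auto
  then have den: "root_dist_prod (proots Q) a s powr \<delta> / (4 ^ degree Q) powr \<delta> \<le> cmod (poly Q z) powr \<delta>"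
    using g by (simp add: powr_divide)
  have num: "cmod (poly P z) powr \<epsilon> \<le> (real M + 1) powr \<epsilon> * (\<Sum>\<nu>\<le>M. taylor_weight P a \<epsilon> \<nu> * s powr (real \<nu> * \<epsilon>))"
    using norm_poly_powr_le_taylor_weights[OF assms(1) _ s(1) assms(6)] s(2) by (simp add: r_def)
  have "cmod (poly P z) powr \<epsilon> / cmod (poly Q z) powr \<delta>
      \<le> (real M + 1) powr \<epsilon> * (\<Sum>\<nu>\<le>M. taylor_weight P a \<epsilon> \<nu> * s powr (real \<nu> * \<epsilon>))
         / (root_dist_prod (proots Q) a s powr \<delta> / (4 ^ degree Q) powr \<delta>)"
    using g
    by (intro frac_le[OF _ num _ den] mult_nonneg_nonneg sum_nonneg) (auto simp: taylor_weight_def)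
  moreover have "z \<in> dyadic_annulus a (2 * \<Lambda>) j" using j by (simp add: mem_dyadic_annulus r_def)
  ultimately show ?thesis using that a(1) by (simp add: s_def field_simps)
qed

lemma integrand_le_sum_over_annuli:
  fixes P Q :: "complex poly" and g :: "complex \<Rightarrow> nat \<Rightarrow> nat \<Rightarrow> real"
  assumes "degree P = M" "lead_coeff Q = 1" "0 < degree Q" "0 < \<Lambda>"
    and "set_mset (proots Q) \<subseteq> ball 0 (\<Lambda> / 2)" "0 \<le> \<epsilon>" "0 \<le> \<delta>"
  defines "g \<equiv> \<lambda>a \<nu> j. (real M + 1) powr \<epsilon> * (4 ^ degree Q) powr \<delta> * taylor_weight P a \<epsilon> \<nu>
      * (2 * \<Lambda> / 2 ^ j) powr (real \<nu> * \<epsilon>) / root_dist_prod (proots Q) a (2 * \<Lambda> / 2 ^ j) powr \<delta>"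
  shows "ennreal (cmod (poly P z) powr \<epsilon> / cmod (poly Q z) powr \<delta>) * indicator (ball 0 \<Lambda>) z
    \<le> (\<Sum>a\<in>set_mset (proots Q). \<Sum>\<nu>\<le>M. \<Sum>j. ennreal (g a \<nu> j) * indicator (dyadic_annulus a (2 * \<Lambda>) j) z)"
proof (cases "z \<in> ball 0 \<Lambda> \<and> poly Q z \<noteq> 0")
  case True
  then have "z \<in> ball 0 \<Lambda>" "poly Q z \<noteq> 0" by auto
  then obtain a j0 where a: "a \<in># proots Q" "z \<in> dyadic_annulus a (2 * \<Lambda>) j0"
    "cmod (poly P z) powr \<epsilon> / cmod (poly Q z) powr \<delta>
       \<le> (real M + 1) powr \<epsilon> * (4 ^ degree Q) powr \<delta>
          * (\<Sum>\<nu>\<le>M. taylor_weight P a \<epsilon> \<nu> * (2 * \<Lambda> / 2 ^ j0) powr (real \<nu> * \<epsilon>))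
          / root_dist_prod (proots Q) a (2 * \<Lambda> / 2 ^ j0) powr \<delta>"
    by (rule integrand_le_at_nearest_root[OF assms(1-7)])
  moreover have "(real M + 1) powr \<epsilon> * (4 ^ degree Q) powr \<delta>
          * (\<Sum>\<nu>\<le>M. taylor_weight P a \<epsilon> \<nu> * (2 * \<Lambda> / 2 ^ j0) powr (real \<nu> * \<epsilon>))
          / root_dist_prod (proots Q) a (2 * \<Lambda> / 2 ^ j0) powr \<delta> = (\<Sum>\<nu>\<le>M. g a \<nu> j0)"
    by (simp add: g_def sum_distrib_left sum_divide_distrib mult.assoc)
  ultimately have a3: "cmod (poly P z) powr \<epsilon> / cmod (poly Q z) powr \<delta> \<le> (\<Sum>\<nu>\<le>M. g a \<nu> j0)"
    by simp
  have g0: "0 \<le> g a \<nu> j" for \<nu> j by (simp add: g_def taylor_weight_def root_dist_prod_def)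
  have "ennreal (cmod (poly P z) powr \<epsilon> / cmod (poly Q z) powr \<delta>) * indicator (ball 0 \<Lambda>) z
      \<le> (\<Sum>\<nu>\<le>M. ennreal (g a \<nu> j0) * indicator (dyadic_annulus a (2 * \<Lambda>) j0) z)"
    using True a(2) a3 g0 by (simp add: ennreal_leI)
  also have "\<dots> \<le> (\<Sum>\<nu>\<le>M. \<Sum>j. ennreal (g a \<nu> j) * indicator (dyadic_annulus a (2 * \<Lambda>) j) z)"
    by (intro sum_mono) (rule sum_le_suminf[where I = "{j0}", simplified]; simp)
  also have "\<dots> \<le> (\<Sum>a\<in>set_mset (proots Q). \<Sum>\<nu>\<le>M. \<Sum>j. ennreal (g a \<nu> j) * indicator (dyadic_annulus a (2 * \<Lambda>) j) z)"
    using a(1) by (intro member_le_sum) auto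
  finally show ?thesis .
qed auto

lemma integral_le_dyadic_sums:
  fixes P Q :: "complex poly"
  assumes "degree P = M" "lead_coeff Q = 1" "0 < degree Q" "0 < \<Lambda>"
    and "set_mset (proots Q) \<subseteq> ball 0 (\<Lambda> / 2)" "0 \<le> \<epsilon>" "0 \<le> \<delta>"
  shows "set_nn_integral lborel (ball 0 \<Lambda>) (\<lambda>z. ennreal (cmod (poly P z) powr \<epsilon> / cmod (poly Q z) powr \<delta>))
    \<le> (\<Sum>a\<in>set_mset (proots Q). \<Sum>\<nu>\<le>M. \<Sum>j. ennreal ((real M + 1) powr \<epsilon> * (4 ^ degree Q) powr \<delta> * pi
          * taylor_weight P a \<epsilon> \<nu>
          * exp (log_profile (real \<nu> * \<epsilon> + 2) \<delta> (degree Q) (nth_largest_dist (proots Q) a) (2 * \<Lambda> / 2 ^ j))))"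
    (is "_ \<le> (\<Sum>a\<in>_. \<Sum>\<nu>\<le>M. \<Sum>j. ennreal (?w a \<nu> j))")
proof -
  define g where "g = (\<lambda>a \<nu> j. (real M + 1) powr \<epsilon> * (4 ^ degree Q) powr \<delta> * taylor_weight P a \<epsilon> \<nu>
      * (2 * \<Lambda> / 2 ^ j) powr (real \<nu> * \<epsilon>) / root_dist_prod (proots Q) a (2 * \<Lambda> / 2 ^ j) powr \<delta>)"
  define f where "f = (\<lambda>a \<nu> j z. ennreal (g a \<nu> j) * indicator (dyadic_annulus a (2 * \<Lambda>) j) z)"
  have f_measurable: "f a \<nu> j \<in> borel_measurable lborel" for a \<nu> j
    unfolding f_def by measurable
  have annulus_integral: "(\<integral>\<^sup>+ z. f a \<nu> j z \<partial>lborel) \<le> ennreal (?w a \<nu> j)" for a \<nu> j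
  proof -
    have g0: "0 \<le> g a \<nu> j" by (simp add: g_def taylor_weight_def)
    have "(\<integral>\<^sup>+ z. f a \<nu> j z \<partial>lborel) = ennreal (g a \<nu> j) * emeasure lborel (dyadic_annulus a (2 * \<Lambda>) j)"
      unfolding f_def using dyadic_annulus_sets by (intro nn_integral_cmult_indicator) simp
    also have "\<dots> \<le> ennreal (g a \<nu> j) * ennreal (pi * (2 * \<Lambda> / 2 ^ j)\<^sup>2)"
      using assms(4) by (intro mult_left_mono emeasure_dyadic_annulus_le) auto
    also have "\<dots> = ennreal (g a \<nu> j * (pi * (2 * \<Lambda> / 2 ^ j)\<^sup>2))"
      using g0 by (simp add: ennreal_mult)
    also have "g a \<nu> j * (pi * (2 * \<Lambda> / 2 ^ j)\<^sup>2) = ?w a \<nu> j"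
      using exp_log_profile[of "2 * \<Lambda> / 2 ^ j" "real \<nu> * \<epsilon>" \<delta> "proots Q" a] assms(4)
      by (simp add: g_def size_proots_complex field_simps)
    finally show ?thesis .
  qed
  have "set_nn_integral lborel (ball 0 \<Lambda>) (\<lambda>z. ennreal (cmod (poly P z) powr \<epsilon> / cmod (poly Q z) powr \<delta>))
      \<le> (\<integral>\<^sup>+ z. (\<Sum>a\<in>set_mset (proots Q). \<Sum>\<nu>\<le>M. \<Sum>j. f a \<nu> j z) \<partial>lborel)"
    unfolding f_def g_def by (intro nn_integral_mono integrand_le_sum_over_annuli assms)
  also have "\<dots> = (\<Sum>a\<in>set_mset (proots Q). \<Sum>\<nu>\<le>M. \<Sum>j. \<integral>\<^sup>+ z. f a \<nu> j z \<partial>lborel)"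
    using f_measurable by (simp add: nn_integral_sum nn_integral_suminf)
  also have "\<dots> \<le> (\<Sum>a\<in>set_mset (proots Q). \<Sum>\<nu>\<le>M. \<Sum>j. ennreal (?w a \<nu> j))"
    by (intro sum_mono suminf_le annulus_integral) auto
  finally show ?thesis .
qed

section \<open>Lower bound for the integral\<close>

lemma norm_poly_le_root_dist_prod:
  fixes Q :: "complex poly"
  assumes "lead_coeff Q = 1" "cmod (z - a) \<le> s"
  shows "cmod (poly Q z) \<le> 2 ^ degree Q * root_dist_prod (proots Q) a s"
proof -
  have "cmod (poly Q z) \<le> 2 ^ degree Q * root_dist_prod (proots Q) a (cmod (z - a))"
    using prod_dist_le_root_dist_prod[where S = "proots Q" and z = z and a = a] assms(1)
    by (simp add: norm_poly_eq_prod_proots size_proots_complex)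
  also have "\<dots> \<le> 2 ^ degree Q * root_dist_prod (proots Q) a s"
    using assms(2) by (intro mult_left_mono root_dist_prod_mono) auto
  finally show ?thesis .
qed

lemma integrand_ge_away_from_roots:
  fixes P Q :: "complex poly"
  assumes "P \<noteq> 0" "degree P = M" "lead_coeff Q = 1" "0 < \<eta>" "\<eta> \<le> 1" "0 < s" "cmod (z - a) \<le> s"
    "0 \<le> \<epsilon>" "0 \<le> \<delta>" and far: "\<And>w. poly P w = 0 \<or> poly Q w = 0 \<Longrightarrow> \<eta> * s \<le> cmod (z - w)"
  shows "((\<eta> / 3) ^ M * (cmod (poly ((pderiv ^^ \<nu>) P) a) / fact \<nu> * s ^ \<nu>)) powr \<epsilon>
           / (2 ^ degree Q * root_dist_prod (proots Q) a s) powr \<delta>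
         \<le> cmod (poly P z) powr \<epsilon> / cmod (poly Q z) powr \<delta>"
proof -
  have "(\<eta> / 3) ^ M * (cmod (poly ((pderiv ^^ \<nu>) P) a) / fact \<nu> * s ^ \<nu>)
      \<le> (\<eta> / 3) ^ M * (cmod (lead_coeff P) * (\<Prod>w\<in>#proots P. s + cmod (a - w)))"
    using assms(4) by (intro mult_left_mono norm_higher_pderiv_le_prod_proots assms(1,6)) auto
  also have "\<dots> \<le> cmod (poly P z)"
    using norm_poly_ge_away_from_roots[OF assms(4-7,1)] far assms(2) by simp
  finally have "((\<eta> / 3) ^ M * (cmod (poly ((pderiv ^^ \<nu>) P) a) / fact \<nu> * s ^ \<nu>)) powr \<epsilon>
      \<le> cmod (poly P z) powr \<epsilon>"
    using assms(4,6,8) by (intro powr_mono2) auto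
  moreover have "poly Q z \<noteq> 0" using far[of z] mult_pos_pos[OF assms(4,6)] by auto
  moreover have "cmod (poly Q z) powr \<delta> \<le> (2 ^ degree Q * root_dist_prod (proots Q) a s) powr \<delta>"
    using norm_poly_le_root_dist_prod[OF assms(3,7)] assms(9) by (intro powr_mono2) auto
  ultimately show ?thesis by (intro frac_le) auto
qed

text \<open>Chosen so that the at most \<open>M + N\<close> discs of radius \<open>good_margin M N * s\<close> about the zeros
  of \<open>P\<close> and \<open>Q\<close> cover at most half the area of a disc of radius \<open>s\<close>.\<close>
definition good_margin :: "nat \<Rightarrow> nat \<Rightarrow> real" where
  "good_margin M N = 1 / sqrt (2 * real (M + N))"

definition lower_const :: "real \<Rightarrow> real \<Rightarrow> nat \<Rightarrow> nat \<Rightarrow> real" where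
  "lower_const \<epsilon> \<delta> M N = ((good_margin M N / 3) ^ M / fact M) powr \<epsilon> / (2 ^ N) powr \<delta> * pi / 2"

lemma good_margin: "0 < N \<Longrightarrow> 0 < good_margin M N \<and> good_margin M N \<le> 1 \<and> real (M + N) * (good_margin M N)\<^sup>2 = 1 / 2"
  by (simp add: good_margin_def power_divide)

lemma lower_const_pos: "0 < N \<Longrightarrow> 0 < lower_const \<epsilon> \<delta> M N"
  using good_margin[of N M] by (simp add: lower_const_def)

lemma lower_const_le:
  assumes "0 < \<eta>" "\<eta> = good_margin M N" "\<nu> \<le> M" "0 < s" "0 \<le> \<epsilon>" "0 \<le> d" "0 < g"
  shows "lower_const \<epsilon> \<delta> M N * d powr \<epsilon> * (s powr (real \<nu> * \<epsilon>) * s\<^sup>2 / g powr \<delta>)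
    \<le> ((\<eta> / 3) ^ M * (d / fact \<nu> * s ^ \<nu>)) powr \<epsilon> / (2 ^ N * g) powr \<delta> * (pi * s\<^sup>2 / 2)"
proof -
  define A where "A = (\<eta> / 3) ^ M / fact \<nu>"
  have A: "0 \<le> A" using assms(1) by (simp add: A_def)
  have "(\<eta> / 3) ^ M / fact M \<le> A"
    unfolding A_def using assms(1) by (intro divide_left_mono fact_mono assms(3)) auto
  then have "((\<eta> / 3) ^ M / fact M) powr \<epsilon> \<le> A powr \<epsilon>"
    using assms(1,5) by (intro powr_mono2) auto
  then have "lower_const \<epsilon> \<delta> M N \<le> A powr \<epsilon> / (2 ^ N) powr \<delta> * pi / 2"
    unfolding lower_const_def assms(2)[symmetric] by (intro divide_right_mono mult_right_mono) auto
  then have "lower_const \<epsilon> \<delta> M N * (d powr \<epsilon> * (s powr (real \<nu> * \<epsilon>) * s\<^sup>2 / g powr \<delta>))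
      \<le> A powr \<epsilon> / (2 ^ N) powr \<delta> * pi / 2 * (d powr \<epsilon> * (s powr (real \<nu> * \<epsilon>) * s\<^sup>2 / g powr \<delta>))"
    by (rule mult_right_mono) simp
  also have "\<dots> = (A * d * s ^ \<nu>) powr \<epsilon> / (2 ^ N * g) powr \<delta> * (pi * s\<^sup>2 / 2)"
  proof -
    have "(A * d * s ^ \<nu>) powr \<epsilon> = A powr \<epsilon> * d powr \<epsilon> * (s ^ \<nu>) powr \<epsilon>"
      using A assms(4,6) by (simp add: powr_mult)
    also have "(s ^ \<nu>) powr \<epsilon> = s powr (real \<nu> * \<epsilon>)"
      using assms(4) by (simp add: powr_powr flip: powr_realpow)
    finally have e1: "(A * d * s ^ \<nu>) powr \<epsilon> = A powr \<epsilon> * d powr \<epsilon> * s powr (real \<nu> * \<epsilon>)" .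
    have e2: "(2 ^ N * g) powr \<delta> = (2 ^ N) powr \<delta> * g powr \<delta>"
      using assms(7) by (simp add: powr_mult)
    show ?thesis unfolding e1 e2 by (simp add: ac_simps)
  qed
  also have "A * d * s ^ \<nu> = (\<eta> / 3) ^ M * (d / fact \<nu> * s ^ \<nu>)"
    by (simp add: A_def)
  finally show ?thesis by (simp only: mult.assoc)
qed

lemma integral_ge_at_scale:
  fixes P Q :: "complex poly"
  assumes "P \<noteq> 0" "degree P = M" "lead_coeff Q = 1" "degree Q = N" "0 < N"
    and roots: "set_mset (proots Q) \<subseteq> ball 0 (\<Lambda> / 2)" and "0 \<le> \<epsilon>" "0 \<le> \<delta>"
    and "a \<in># proots Q" "\<nu> \<le> M" "0 < s" "s \<le> \<Lambda> / 4"
  shows "ennreal (lower_const \<epsilon> \<delta> M N * cmod (poly ((pderiv ^^ \<nu>) P) a) powr \<epsilon>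
                  * exp (log_profile (real \<nu> * \<epsilon> + 2) \<delta> N (nth_largest_dist (proots Q) a) s))
         \<le> set_nn_integral lborel (ball 0 \<Lambda>) (\<lambda>z. ennreal (cmod (poly P z) powr \<epsilon> / cmod (poly Q z) powr \<delta>))"
proof -
  define \<eta> where "\<eta> = good_margin M N"
  have \<eta>: "0 < \<eta>" "\<eta> \<le> 1" "real (M + N) * \<eta>\<^sup>2 = 1 / 2"
    using good_margin[OF assms(5)] by (simp_all add: \<eta>_def)
  define W where "W = {w. poly P w = 0} \<union> {w. poly Q w = 0}"
  have "Q \<noteq> 0" using assms(3) by auto
  then have W: "finite W" using assms(1) by (simp add: W_def poly_roots_finite)
  have "card W \<le> M + N"
    using card_Un_le[of "{w. poly P w = 0}" "{w. poly Q w = 0}"] assms(2,4)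
      card_poly_roots_bound[OF assms(1)] card_poly_roots_bound[OF \<open>Q \<noteq> 0\<close>]
    unfolding W_def by linarith
  then have card_W: "real (card W) * \<eta>\<^sup>2 \<le> 1 / 2"
    using \<eta>(3) mult_right_mono[of "real (card W)" "real (M + N)" "\<eta>\<^sup>2"] by simp
  have "cmod a < \<Lambda> / 2" using assms(9) roots by auto
  then have ball: "ball a s \<subseteq> ball 0 \<Lambda>"
    using assms(12) by (subst ball_subset_ball_iff) auto
  define g where "g = root_dist_prod (proots Q) a s"
  define v where "v = ((\<eta> / 3) ^ M * (cmod (poly ((pderiv ^^ \<nu>) P) a) / fact \<nu> * s ^ \<nu>)) powr \<epsilon>
                        / (2 ^ N * g) powr \<delta>"
  have bound: "v \<le> cmod (poly P z) powr \<epsilon> / cmod (poly Q z) powr \<delta>"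
    if "z \<in> ball a s" "\<And>w. w \<in> W \<Longrightarrow> \<eta> * s \<le> dist w z" for z
    unfolding v_def g_def assms(4)[symmetric] using that assms \<eta>
    by (intro integrand_ge_away_from_roots) (auto simp: W_def dist_norm norm_minus_commute)
  have "ennreal (v * (pi * s\<^sup>2 / 2)) \<le> set_nn_integral lborel (ball 0 \<Lambda>)
                     (\<lambda>z. ennreal (cmod (poly P z) powr \<epsilon> / cmod (poly Q z) powr \<delta>))"
    by (rule nn_integral_ge_on_ball_minus_small_balls[OF W assms(11) \<eta>(1) card_W ball _ bound])
      (simp add: v_def)
  moreover have "exp (log_profile (real \<nu> * \<epsilon> + 2) \<delta> N (nth_largest_dist (proots Q) a) s)
      = s powr (real \<nu> * \<epsilon>) * s\<^sup>2 / g powr \<delta>"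
    using exp_log_profile[OF assms(11), of "real \<nu> * \<epsilon>" \<delta> "proots Q" a] assms(4)
    by (simp add: g_def size_proots_complex)
  then have "lower_const \<epsilon> \<delta> M N * cmod (poly ((pderiv ^^ \<nu>) P) a) powr \<epsilon>
      * exp (log_profile (real \<nu> * \<epsilon> + 2) \<delta> N (nth_largest_dist (proots Q) a) s) \<le> v * (pi * s\<^sup>2 / 2)"
    unfolding v_def using \<eta>(1) assms(7,10,11) root_dist_prod_pos[OF assms(11)]
    by (simp only:) (rule lower_const_le, auto simp: \<eta>_def g_def)
  ultimately show ?thesis by (meson ennreal_leI order.trans)
qed

definition weighted_integral :: "real \<Rightarrow> real \<Rightarrow> real \<Rightarrow> complex poly \<Rightarrow> complex poly \<Rightarrow> ennreal" where
  "weighted_integral \<epsilon> \<delta> \<Lambda> P Q = set_nn_integral lborel (ball 0 \<Lambda>)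
     (\<lambda>z. ennreal (cmod (poly P z) powr \<epsilon> / cmod (poly Q z) powr \<delta>))"

definition Phi_term :: "real \<Rightarrow> real \<Rightarrow> real \<Rightarrow> complex poly \<Rightarrow> complex poly \<Rightarrow> complex \<Rightarrow> nat \<Rightarrow> ennreal" where
  "Phi_term \<epsilon> \<delta> \<Lambda> P Q \<alpha> \<nu> = ennreal (cmod (poly ((pderiv ^^ \<nu>) P) \<alpha>) powr \<epsilon>)
     / ennreal (Phi \<epsilon> \<delta> \<Lambda> (proots Q) \<nu> (k_index \<epsilon> \<delta> (degree Q) \<nu>) \<alpha>)"

definition Phi_sum :: "real \<Rightarrow> real \<Rightarrow> real \<Rightarrow> complex poly \<Rightarrow> complex poly \<Rightarrow> ennreal" where
  "Phi_sum \<epsilon> \<delta> \<Lambda> P Q = (\<Sum>\<alpha>\<in>{\<alpha>. poly Q \<alpha> = 0}. \<Sum>\<nu>\<in>{\<nu>. poly ((pderiv ^^ \<nu>) P) \<alpha> \<noteq> 0}.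
     Phi_term \<epsilon> \<delta> \<Lambda> P Q \<alpha> \<nu>)"

lemma Phi_sum_eq:
  fixes P Q :: "complex poly"
  assumes "Q \<noteq> 0"
  shows "Phi_sum \<epsilon> \<delta> \<Lambda> P Q = (\<Sum>\<alpha>\<in>set_mset (proots Q). \<Sum>\<nu>\<le>degree P.
           if poly ((pderiv ^^ \<nu>) P) \<alpha> \<noteq> 0 then Phi_term \<epsilon> \<delta> \<Lambda> P Q \<alpha> \<nu> else 0)"
proof -
  have nu: "{\<nu>. poly ((pderiv ^^ \<nu>) P) \<alpha> \<noteq> 0} = {\<nu>\<in>{..degree P}. poly ((pderiv ^^ \<nu>) P) \<alpha> \<noteq> 0}" for \<alpha>
    using higher_pderiv_eq_0[of P] by (force simp: not_le[symmetric])
  have alpha: "{\<alpha>. poly Q \<alpha> = 0} = set_mset (proots Q)" using assms by auto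
  show ?thesis
    unfolding Phi_sum_def by (simp only: alpha nu sum.inter_filter[OF finite_atMost])
qed

lemma nonresonance_margin:
  fixes \<epsilon> \<delta> :: real and M N :: nat
  assumes "\<forall>k \<le> N. \<forall>\<nu> \<le> M. real \<nu> * \<epsilon> + 2 - real (N - k) * \<delta> \<noteq> 0"
  obtains \<eta> where "0 < \<eta>" "\<And>\<nu> j. \<nu> \<le> M \<Longrightarrow> j \<le> N \<Longrightarrow> \<eta> \<le> \<bar>real \<nu> * \<epsilon> + 2 - real j * \<delta>\<bar>"
proof -
  define V where "V = (\<lambda>(\<nu>, j). \<bar>real \<nu> * \<epsilon> + 2 - real j * \<delta>\<bar>) ` ({..M} \<times> {..N})"
  have V: "finite V" "V \<noteq> {}" by (auto simp: V_def)
  have "real \<nu> * \<epsilon> + 2 - real j * \<delta> \<noteq> 0" if "\<nu> \<le> M" "j \<le> N" for \<nu> j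
    using assms that by (metis diff_diff_cancel diff_le_self)
  then have "0 < Min V" using V by (auto simp: V_def)
  moreover have "Min V \<le> \<bar>real \<nu> * \<epsilon> + 2 - real j * \<delta>\<bar>" if "\<nu> \<le> M" "j \<le> N" for \<nu> j
    using V that by (intro Min_le) (auto simp: V_def)
  ultimately show ?thesis by (rule that)
qed

definition upper_const :: "real \<Rightarrow> real \<Rightarrow> real \<Rightarrow> nat \<Rightarrow> nat \<Rightarrow> real" where
  "upper_const \<epsilon> \<delta> \<eta> M N = 2 powr (real M * \<epsilon> + 2 + real N * \<delta>) * dyadic_const \<eta>
     * ((real M + 1) powr \<epsilon> * (4 ^ N) powr \<delta> * pi)"

lemma upper_const_pos: "0 < \<eta> \<Longrightarrow> 0 < upper_const \<epsilon> \<delta> \<eta> M N"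
  using dyadic_const_pos[of \<eta>] by (simp add: upper_const_def)

lemma dyadic_sum_le_Phi_term:
  fixes P Q :: "complex poly"
  assumes "lead_coeff Q = 1" "degree Q = N" "0 < \<Lambda>"
    and "set_mset (proots Q) \<subseteq> ball 0 (\<Lambda> / 2)" "0 \<le> \<epsilon>" "0 \<le> \<delta>" "0 < \<eta>"
    and "\<And>j. j \<le> N \<Longrightarrow> \<eta> \<le> \<bar>real \<nu> * \<epsilon> + 2 - real j * \<delta>\<bar>" "a \<in># proots Q" "\<nu> \<le> M"
  shows "(\<Sum>j. ennreal ((real M + 1) powr \<epsilon> * (4 ^ N) powr \<delta> * pi * taylor_weight P a \<epsilon> \<nu>
             * exp (log_profile (real \<nu> * \<epsilon> + 2) \<delta> N (nth_largest_dist (proots Q) a) (2 * \<Lambda> / 2 ^ j))))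
         \<le> ennreal (upper_const \<epsilon> \<delta> \<eta> M N)
            * (if poly ((pderiv ^^ \<nu>) P) a \<noteq> 0 then Phi_term \<epsilon> \<delta> \<Lambda> P Q a \<nu> else 0)"
proof -
  have N: "size (proots Q) = N" using assms(1,2) by (simp add: size_proots_complex)
  interpret nonresonant_root "proots Q" a \<Lambda> \<epsilon> \<delta> \<eta> \<nu> M
    by unfold_locales (use assms N in auto)
  define d where "d = (real M + 1) powr \<epsilon> * (4 ^ N) powr \<delta> * pi * taylor_weight P a \<epsilon> \<nu>"
  have d: "0 \<le> d" by (simp add: d_def taylor_weight_def)
  have sum_le: "(\<Sum>j. ennreal (d * exp (F (2 * \<Lambda> / 2 ^ j))))
      \<le> ennreal (2 powr (real M * \<epsilon> + 2 + real N * \<delta>) * dyadic_const \<eta> * d) / ennreal \<Phi>"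
    using dyadic_sum_le_inverse_Phi[OF d] unfolding N .
  show ?thesis
  proof (cases "poly ((pderiv ^^ \<nu>) P) a = 0")
    case True
    then have "d = 0" by (simp add: d_def taylor_weight_def)
    then show ?thesis using True unfolding d_def[symmetric] by simp
  next
    case False
    define D where "D = cmod (poly ((pderiv ^^ \<nu>) P) a)"
    have "D / fact \<nu> \<le> D" by (simp add: D_def divide_le_cancel divide_left_mono[of 1, simplified])
    then have "taylor_weight P a \<epsilon> \<nu> \<le> D powr \<epsilon>"
      unfolding taylor_weight_def D_def[symmetric] using assms(5) by (intro powr_mono2) (auto simp: D_def)
    then have "2 powr (real M * \<epsilon> + 2 + real N * \<delta>) * dyadic_const \<eta> * d \<le> upper_const \<epsilon> \<delta> \<eta> M N * D powr \<epsilon>"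
      using dyadic_const_pos[OF assms(7)] by (simp add: upper_const_def d_def mult_left_mono)
    then have "ennreal (2 powr (real M * \<epsilon> + 2 + real N * \<delta>) * dyadic_const \<eta> * d) / ennreal \<Phi>
        \<le> ennreal (upper_const \<epsilon> \<delta> \<eta> M N * D powr \<epsilon>) / ennreal \<Phi>"
      by (intro divide_right_mono_ennreal ennreal_leI)
    also have "\<dots> = ennreal (upper_const \<epsilon> \<delta> \<eta> M N) * Phi_term \<epsilon> \<delta> \<Lambda> P Q a \<nu>"
      using less_imp_le[OF upper_const_pos[OF assms(7)]] assms(2)
      by (simp add: Phi_term_def D_def N ennreal_mult ennreal_times_divide)
    finally show ?thesis using sum_le False N by (simp add: d_def)
  qed
qed

lemma Phi_term_le_weighted_integral:
  fixes P Q :: "complex poly"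
  assumes "P \<noteq> 0" "degree P = M" "lead_coeff Q = 1" "degree Q = N" "0 < N" "0 < \<Lambda>"
    and "set_mset (proots Q) \<subseteq> ball 0 (\<Lambda> / 2)" "0 \<le> \<epsilon>" "0 \<le> \<delta>" "0 < \<eta>"
    and "\<And>j. j \<le> N \<Longrightarrow> \<eta> \<le> \<bar>real \<nu> * \<epsilon> + 2 - real j * \<delta>\<bar>" "a \<in># proots Q" "\<nu> \<le> M"
  shows "ennreal (4 powr - (real M * \<epsilon> + 2) * lower_const \<epsilon> \<delta> M N)
           * (if poly ((pderiv ^^ \<nu>) P) a \<noteq> 0 then Phi_term \<epsilon> \<delta> \<Lambda> P Q a \<nu> else 0)
         \<le> weighted_integral \<epsilon> \<delta> \<Lambda> P Q"
proof (cases "poly ((pderiv ^^ \<nu>) P) a = 0")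
  case False
  have N: "size (proots Q) = N" using assms(3,4) by (simp add: size_proots_complex)
  interpret nonresonant_root "proots Q" a \<Lambda> \<epsilon> \<delta> \<eta> \<nu> M
    by unfold_locales (use assms N in auto)
  define d where "d = lower_const \<epsilon> \<delta> M N * cmod (poly ((pderiv ^^ \<nu>) P) a) powr \<epsilon>"
  have d: "0 < d" using False lower_const_pos[OF assms(5)] by (simp add: d_def)
  have "ennreal (4 powr - (real M * \<epsilon> + 2) * d) / ennreal \<Phi> \<le> weighted_integral \<epsilon> \<delta> \<Lambda> P Q"
    using integral_ge_at_scale[OF assms(1-5,7-9,12,13)] N
    by (intro inverse_Phi_le[OF d]) (simp add: d_def weighted_integral_def)
  moreover have "ennreal (4 powr - (real M * \<epsilon> + 2) * d)
      = ennreal (4 powr - (real M * \<epsilon> + 2) * lower_const \<epsilon> \<delta> M N)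
        * ennreal (cmod (poly ((pderiv ^^ \<nu>) P) a) powr \<epsilon>)"
    using lower_const_pos[OF assms(5), of \<epsilon> \<delta> M] by (simp add: d_def mult.assoc ennreal_mult)
  then have "ennreal (4 powr - (real M * \<epsilon> + 2) * d) / ennreal \<Phi>
      = ennreal (4 powr - (real M * \<epsilon> + 2) * lower_const \<epsilon> \<delta> M N) * Phi_term \<epsilon> \<delta> \<Lambda> P Q a \<nu>"
    using assms(4) N by (simp add: Phi_term_def ennreal_times_divide)
  ultimately show ?thesis using False by simp
qed simp

lemma weighted_integral_le_Phi_sum:
  fixes P Q :: "complex poly"
  assumes "degree P = M" "lead_coeff Q = 1" "degree Q = N" "0 < N" "0 < \<Lambda>"
    and "set_mset (proots Q) \<subseteq> ball 0 (\<Lambda> / 2)" "0 \<le> \<epsilon>" "0 \<le> \<delta>" "0 < \<eta>"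
    and "\<And>\<nu> j. \<nu> \<le> M \<Longrightarrow> j \<le> N \<Longrightarrow> \<eta> \<le> \<bar>real \<nu> * \<epsilon> + 2 - real j * \<delta>\<bar>"
  shows "weighted_integral \<epsilon> \<delta> \<Lambda> P Q \<le> ennreal (upper_const \<epsilon> \<delta> \<eta> M N) * Phi_sum \<epsilon> \<delta> \<Lambda> P Q"
proof -
  have "weighted_integral \<epsilon> \<delta> \<Lambda> P Q \<le> (\<Sum>a\<in>set_mset (proots Q). \<Sum>\<nu>\<le>M. \<Sum>j.
          ennreal ((real M + 1) powr \<epsilon> * (4 ^ N) powr \<delta> * pi * taylor_weight P a \<epsilon> \<nu>
          * exp (log_profile (real \<nu> * \<epsilon> + 2) \<delta> N (nth_largest_dist (proots Q) a) (2 * \<Lambda> / 2 ^ j))))"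
    unfolding weighted_integral_def assms(3)[symmetric]
    by (rule integral_le_dyadic_sums) (use assms in auto)
  also have "\<dots> \<le> (\<Sum>a\<in>set_mset (proots Q). \<Sum>\<nu>\<le>M. ennreal (upper_const \<epsilon> \<delta> \<eta> M N)
          * (if poly ((pderiv ^^ \<nu>) P) a \<noteq> 0 then Phi_term \<epsilon> \<delta> \<Lambda> P Q a \<nu> else 0))"
    by (intro sum_mono dyadic_sum_le_Phi_term[OF assms(2,3,5-9)]) (use assms(10) in auto)
  also have "\<dots> = ennreal (upper_const \<epsilon> \<delta> \<eta> M N) * Phi_sum \<epsilon> \<delta> \<Lambda> P Q"
    using assms(2) by (subst Phi_sum_eq) (auto simp: assms(1) sum_distrib_left)
  finally show ?thesis .
qed

lemma Phi_sum_le_weighted_integral: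
  fixes P Q :: "complex poly"
  assumes "P \<noteq> 0" "degree P = M" "lead_coeff Q = 1" "degree Q = N" "0 < N" "0 < \<Lambda>"
    and "set_mset (proots Q) \<subseteq> ball 0 (\<Lambda> / 2)" "0 \<le> \<epsilon>" "0 \<le> \<delta>" "0 < \<eta>"
    and "\<And>\<nu> j. \<nu> \<le> M \<Longrightarrow> j \<le> N \<Longrightarrow> \<eta> \<le> \<bar>real \<nu> * \<epsilon> + 2 - real j * \<delta>\<bar>"
  shows "ennreal (4 powr - (real M * \<epsilon> + 2) * lower_const \<epsilon> \<delta> M N / (real N * (real M + 1)))
           * Phi_sum \<epsilon> \<delta> \<Lambda> P Q \<le> weighted_integral \<epsilon> \<delta> \<Lambda> P Q"
proof -
  define c where "c = 4 powr - (real M * \<epsilon> + 2) * lower_const \<epsilon> \<delta> M N"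
  define K where "K = real N * (real M + 1)"
  have c: "0 < c" using lower_const_pos[OF assms(5)] by (simp add: c_def)
  have K: "0 < K" using assms(5) by (simp add: K_def)
  have "Q \<noteq> 0" using assms(3) by auto
  then have "set_mset (proots Q) = {x. poly Q x = 0}" by auto
  then have "card (set_mset (proots Q)) \<le> N"
    using card_poly_roots_bound[OF \<open>Q \<noteq> 0\<close>] assms(4) by simp
  have "ennreal c * Phi_sum \<epsilon> \<delta> \<Lambda> P Q \<le> (\<Sum>a\<in>set_mset (proots Q). \<Sum>\<nu>\<le>M. weighted_integral \<epsilon> \<delta> \<Lambda> P Q)"
    unfolding Phi_sum_eq[OF \<open>Q \<noteq> 0\<close>] assms(2) sum_distrib_left c_def
    using Phi_term_le_weighted_integral[OF assms(1-10)] assms(11) by (intro sum_mono) auto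
  also have "\<dots> = of_nat (card (set_mset (proots Q))) * of_nat (Suc M) * weighted_integral \<epsilon> \<delta> \<Lambda> P Q"
    by (simp only: sum_constant card_atMost mult.assoc)
  also have "\<dots> \<le> ennreal K * weighted_integral \<epsilon> \<delta> \<Lambda> P Q"
  proof (rule mult_right_mono)
    have "real (card (set_mset (proots Q))) * real (Suc M) \<le> K"
      using \<open>card (set_mset (proots Q)) \<le> N\<close> by (simp add: K_def add.commute mult_right_mono)
    then show "of_nat (card (set_mset (proots Q))) * of_nat (Suc M) \<le> ennreal K"
      by (simp add: ennreal_of_nat_eq_real_of_nat ennreal_mult[symmetric] ennreal_leI
          del: of_nat_Suc)
  qed simp
  finally have "ennreal (1 / K) * (ennreal c * Phi_sum \<epsilon> \<delta> \<Lambda> P Q)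
      \<le> ennreal (1 / K) * (ennreal K * weighted_integral \<epsilon> \<delta> \<Lambda> P Q)"
    by (rule mult_left_mono) simp
  moreover have "ennreal (1 / K) * (ennreal c * Phi_sum \<epsilon> \<delta> \<Lambda> P Q) = ennreal (c / K) * Phi_sum \<epsilon> \<delta> \<Lambda> P Q"
    using c K by (simp add: ennreal_mult[symmetric] mult.assoc[symmetric])
  moreover have "ennreal (1 / K) * (ennreal K * weighted_integral \<epsilon> \<delta> \<Lambda> P Q) = weighted_integral \<epsilon> \<delta> \<Lambda> P Q"
    using K by (simp add: ennreal_mult[symmetric] mult.assoc[symmetric])
  ultimately show ?thesis by (simp add: c_def K_def)
qed

theorem theorem1:
  fixes \<epsilon> \<delta> :: real and M N :: nat
  assumes "\<epsilon> \<ge> 0" and "\<delta> \<ge> 0" and "M > 0" and "N > 0"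
    and "\<forall>k \<le> N. \<forall>\<nu> \<le> M. real \<nu> * \<epsilon> + 2 - real (N - k) * \<delta> \<noteq> 0"
  shows "\<exists>c C :: real. c > 0 \<and> C > 0 \<and>
    (\<forall>(P :: complex poly) (Q :: complex poly) (\<Lambda> :: real).
       P \<noteq> 0 \<and> degree P = M \<and> lead_coeff Q = 1 \<and> degree Q = N \<and> \<Lambda> > 0 \<and>
       set_mset (proots Q) \<subseteq> ball 0 (\<Lambda> / 2) \<longrightarrow>
       (let I = set_nn_integral lborel (ball 0 \<Lambda>)
                  (\<lambda>z. ennreal (cmod (poly P z) powr \<epsilon> / cmod (poly Q z) powr \<delta>));
            R = (\<Sum>\<alpha>\<in>{\<alpha>. poly Q \<alpha> = 0}.
                   \<Sum>\<nu>\<in>{\<nu>. poly ((pderiv ^^ \<nu>) P) \<alpha> \<noteq> 0}.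
                     ennreal (cmod (poly ((pderiv ^^ \<nu>) P) \<alpha>) powr \<epsilon>)
                     / ennreal (Phi \<epsilon> \<delta> \<Lambda> (proots Q) \<nu> (k_index \<epsilon> \<delta> N \<nu>) \<alpha>))
        in ennreal c * R \<le> I \<and> I \<le> ennreal C * R))"
proof -
  obtain \<eta> where \<eta>: "0 < \<eta>" "\<And>\<nu> j. \<nu> \<le> M \<Longrightarrow> j \<le> N \<Longrightarrow> \<eta> \<le> \<bar>real \<nu> * \<epsilon> + 2 - real j * \<delta>\<bar>"
    using nonresonance_margin[OF assms(5)] by blast
  define c where "c = 4 powr - (real M * \<epsilon> + 2) * lower_const \<epsilon> \<delta> M N / (real N * (real M + 1))"
  have "0 < c" using lower_const_pos[OF assms(4)] assms(4) by (simp add: c_def)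
  moreover have "0 < upper_const \<epsilon> \<delta> \<eta> M N" using \<eta>(1) by (rule upper_const_pos)
  moreover have "ennreal c * Phi_sum \<epsilon> \<delta> \<Lambda> P Q \<le> weighted_integral \<epsilon> \<delta> \<Lambda> P Q \<and>
      weighted_integral \<epsilon> \<delta> \<Lambda> P Q \<le> ennreal (upper_const \<epsilon> \<delta> \<eta> M N) * Phi_sum \<epsilon> \<delta> \<Lambda> P Q"
    if "P \<noteq> 0 \<and> degree P = M \<and> lead_coeff Q = 1 \<and> degree Q = N \<and> \<Lambda> > 0 \<and>
        set_mset (proots Q) \<subseteq> ball 0 (\<Lambda> / 2)" for P Q :: "complex poly" and \<Lambda> :: real
    unfolding c_def
    by (intro conjI Phi_sum_le_weighted_integral weighted_integral_le_Phi_sum)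
      (use that assms(1,2,4) \<eta> in auto)
  ultimately show ?thesis
    unfolding Let_def weighted_integral_def Phi_sum_def Phi_term_def
    by (intro exI[of _ c] exI[of _ "upper_const \<epsilon> \<delta> \<eta> M N"]) auto
qed

end
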